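(* Let $\mathbb{K}$ be an algebraically closed field of characteristic $p$, with $p=0$ or $p\ge5$. Let $G$ be a finite group containing a normal subgroup $H$ of order $n\ge3$. Assume that $G$ is realized by a dual $3$-net $(\Lambda_1,\Lambda_2,\Lambda_3)$ in $PG(2,\mathbb{K})$ (with $|G|<p$ if $p>0$) via bijections $\alpha,\beta,\gamma$, and that every dual $3$-subnet of $(\Lambda_1,\Lambda_2,\Lambda_3)$ realizing $H$ as a subgroup of $G$ is triangular. Then $H$ is cyclic and $(\Lambda_1,\Lambda_2,\Lambda_3)$ is either triangular or of tetrahedron type.
   Context: A dual $3$-net of order $N$ in $PG(2,\mathbb{K})$ is a triple $(\Lambda_1,\Lambda_2,\Lambda_3)$ of pairwise disjoint point sets, each of size $N$, such that every line meeting two distinct components meets each component in exactly one point. It realizes $(G,\cdot)$ via bijections $\alpha:G\to\Lambda_1$, $\beta:G\to\Lambda_2$, $\gamma:G\to\Lambda_3$ if $a\cdot b=c$ iff $\alpha(a),\beta(b),\gamma(c)$ are collinear. For $H$ normal in $G$, the dual $3$-subnets realizing $H$ as a subgroup of $G$ are the triples $(\alpha(g_1H),\beta(g_2H),\gamma(g_1g_2H))$ for $g_1,g_2\in G$. A dual $3$-net (of order $\ge 3$ here) is triangular if its three components lie respectively on the three sides of a triangle. A dual $3$-net $(\Lambda_1,\Lambda_2,\Lambda_3)$ of order $2m$ is of tetrahedron type if it contains a dual $3$-subnet $(\Gamma_1,\Gamma_2,\Gamma_3)$ of order $m$ with $\Gamma_i\subset\Lambda_i$ and, setting $\Delta_i=\Lambda_i\setminus\Gamma_i$,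 the six sets $\Gamma_i,\Delta_i$ lie on the six sides of a non-degenerate quadrangle, with $\Gamma_i$ and $\Delta_i$ on opposite sides (sides sharing no vertex) for each $i$. *)

theory Defs
  imports "HOL-Computational_Algebra.Polynomial" "HOL-Algebra.Coset" "HOL-Algebra.Elementary_Groups"
begin

text \<open>The projective plane PG(2,K): a point is the set of nonzero scalar
multiples of a nonzero vector of K^3 (vectors are triples).\<close>

type_synonym 'k vec3 = "'k \<times> 'k \<times> 'k"
type_synonym 'k ppoint = "'k vec3 set"

definition scale3 :: "'k::field \<Rightarrow> 'k vec3 \<Rightarrow> 'k vec3" where
  "scale3 c v = (case v of (a, b, d) \<Rightarrow> (c * a, c * b, c * d))"

definition proj_pt :: "'k::field vec3 \<Rightarrow> 'k ppoint" where
  "proj_pt v = {scale3 c v | c. c \<noteq> 0}"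

definition is_point :: "'k::field ppoint \<Rightarrow> bool" where
  "is_point P \<longleftrightarrow> (\<exists>v. v \<noteq> (0, 0, 0) \<and> P = proj_pt v)"

definition dot3 :: "'k::field vec3 \<Rightarrow> 'k vec3 \<Rightarrow> 'k" where
  "dot3 u v = (case u of (a1, a2, a3) \<Rightarrow> case v of (b1, b2, b3) \<Rightarrow> a1 * b1 + a2 * b2 + a3 * b3)"

definition det3 :: "'k::field vec3 \<Rightarrow> 'k vec3 \<Rightarrow> 'k vec3 \<Rightarrow> 'k" where
  "det3 u v w = (case u of (a1, a2, a3) \<Rightarrow> case v of (b1, b2, b3) \<Rightarrow> case w of (c1, c2, c3) \<Rightarrow>
      a1 * (b2 * c3 - b3 * c2) - a2 * (b1 * c3 - b3 * c1) + a3 * (b1 * c2 - b2 * c1))"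

text \<open>Three points are collinear iff (some, equivalently all) representatives are linearly dependent.\<close>
definition pcollinear :: "'k::field ppoint \<Rightarrow> 'k ppoint \<Rightarrow> 'k ppoint \<Rightarrow> bool" where
  "pcollinear P Q R \<longleftrightarrow> (\<exists>u\<in>P. \<exists>v\<in>Q. \<exists>w\<in>R. det3 u v w = 0)"

definition is_line :: "'k::field ppoint set \<Rightarrow> bool" where
  "is_line L \<longleftrightarrow> (\<exists>a. a \<noteq> (0, 0, 0) \<and> L = {P. is_point P \<and> (\<forall>v\<in>P. dot3 a v = 0)})"

definition line_thru :: "'k::field ppoint \<Rightarrow> 'k ppoint \<Rightarrow> 'k ppoint set" where
  "line_thru P Q = {R. is_point R \<and> pcollinear P Q R}"

definition dual_3net :: "nat \<Rightarrow> 'k::field ppoint set \<Rightarrow> 'k ppoint set \<Rightarrow> 'k ppoint set \<Rightarrow> bool" where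
  "dual_3net N L1 L2 L3 \<longleftrightarrow>
     (\<forall>i<3. Ball ([L1, L2, L3] ! i) is_point \<and> finite ([L1, L2, L3] ! i) \<and> card ([L1, L2, L3] ! i) = N) \<and>
     (\<forall>i<3. \<forall>j<3. i \<noteq> j \<longrightarrow> [L1, L2, L3] ! i \<inter> [L1, L2, L3] ! j = {}) \<and>
     (\<forall>L. is_line L \<longrightarrow>
        (\<exists>i<3. \<exists>j<3. i \<noteq> j \<and> L \<inter> [L1, L2, L3] ! i \<noteq> {} \<and> L \<inter> [L1, L2, L3] ! j \<noteq> {}) \<longrightarrow>
        (\<forall>k<3. card (L \<inter> [L1, L2, L3] ! k) = 1))"

definition realizes ::
  "('g, 'b) monoid_scheme \<Rightarrow> 'k::field ppoint set \<Rightarrow> 'k ppoint set \<Rightarrow> 'k ppoint set \<Rightarrow>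
   ('g \<Rightarrow> 'k ppoint) \<Rightarrow> ('g \<Rightarrow> 'k ppoint) \<Rightarrow> ('g \<Rightarrow> 'k ppoint) \<Rightarrow> bool" where
  "realizes G L1 L2 L3 \<alpha> \<beta> \<gamma> \<longleftrightarrow>
     bij_betw \<alpha> (carrier G) L1 \<and> bij_betw \<beta> (carrier G) L2 \<and> bij_betw \<gamma> (carrier G) L3 \<and>
     (\<forall>a\<in>carrier G. \<forall>b\<in>carrier G. \<forall>c\<in>carrier G.
        a \<otimes>\<^bsub>G\<^esub> b = c \<longleftrightarrow> pcollinear (\<alpha> a) (\<beta> b) (\<gamma> c))"

definition triangular :: "'k::field ppoint set \<Rightarrow> 'k ppoint set \<Rightarrow> 'k ppoint set \<Rightarrow> bool" where
  "triangular L1 L2 L3 \<longleftrightarrow>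
     (\<exists>A B C. is_point A \<and> is_point B \<and> is_point C \<and> \<not> pcollinear A B C \<and>
        L1 \<subseteq> line_thru B C \<and> L2 \<subseteq> line_thru A C \<and> L3 \<subseteq> line_thru A B)"

definition nondeg_quadrangle :: "'k::field ppoint \<Rightarrow> 'k ppoint \<Rightarrow> 'k ppoint \<Rightarrow> 'k ppoint \<Rightarrow> bool" where
  "nondeg_quadrangle A B C D \<longleftrightarrow> is_point A \<and> is_point B \<and> is_point C \<and> is_point D \<and>
     \<not> pcollinear A B C \<and> \<not> pcollinear A B D \<and> \<not> pcollinear A C D \<and> \<not> pcollinear B C D"

definition opposite_sides :: "'k::field ppoint \<Rightarrow> 'k ppoint \<Rightarrow> 'k ppoint \<Rightarrow> 'k ppoint \<Rightarrow>
    ('k ppoint set \<times> 'k ppoint set) set" where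
  "opposite_sides A B C D =
     {(line_thru A B, line_thru C D), (line_thru C D, line_thru A B),
      (line_thru A C, line_thru B D), (line_thru B D, line_thru A C),
      (line_thru A D, line_thru B C), (line_thru B C, line_thru A D)}"

definition tetrahedron_type :: "'k::field ppoint set \<Rightarrow> 'k ppoint set \<Rightarrow> 'k ppoint set \<Rightarrow> bool" where
  "tetrahedron_type L1 L2 L3 \<longleftrightarrow>
     (\<exists>m. dual_3net (2 * m) L1 L2 L3 \<and>
       (\<exists>\<Gamma>1 \<Gamma>2 \<Gamma>3. \<Gamma>1 \<subseteq> L1 \<and> \<Gamma>2 \<subseteq> L2 \<and> \<Gamma>3 \<subseteq> L3 \<and> dual_3net m \<Gamma>1 \<Gamma>2 \<Gamma>3 \<and>
         (\<exists>A B C D. nondeg_quadrangle A B C D \<and>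
           (\<exists>S1 T1 S2 T2 S3 T3.
              (S1, T1) \<in> opposite_sides A B C D \<and> (S2, T2) \<in> opposite_sides A B C D \<and>
              (S3, T3) \<in> opposite_sides A B C D \<and> card {S1, T1, S2, T2, S3, T3} = 6 \<and>
              \<Gamma>1 \<subseteq> S1 \<and> L1 - \<Gamma>1 \<subseteq> T1 \<and> \<Gamma>2 \<subseteq> S2 \<and> L2 - \<Gamma>2 \<subseteq> T2 \<and>
              \<Gamma>3 \<subseteq> S3 \<and> L3 - \<Gamma>3 \<subseteq> T3))))"

end

theory Submission
  imports Defs "HOL-Algebra.Multiplicative_Group"
begin

text \<open>Each coset subnet $(\alpha(xH), \beta(yH), \gamma(xyH))$ lies on the sides of a triangle $pqr$.
  Writing its points as $\alpha(a) = [q + s_a r]$, $\beta(b) = [r + t_b p]$, $\gamma(c) = [p + u_c q]$,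
  collinearity becomes $1 + s_a t_b u_{ab} = 0$. Hence right multiplication by $h \in H$ scales the
  coordinates $s$ by a factor $\mu(h)$, and $\mu$ embeds $H$ into $K^*$, so $H$ is cyclic. As
  $|H| \geq 3$, the ends of the side carrying $\alpha(xH)$ are the two fixed points of this scaling, so they
  depend on $x$ only; similarly for $\beta(yH)$ and $\gamma(zH)$. The ends of the three sides satisfy
  $E_3(xy) = E_1(x) \mathbin{\triangle} E_2(y)$, so $x \mapsto E_1(x) \mathbin{\triangle} E_1(1)$ is a
  homomorphism into the Boolean group of finite point sets. Its image is either trivial, and then all
  of the net lies on one triangle, or $\{\emptyset, \{P, Q, R, W\}\}$ for a fourth point $W$; then its
  kernel has index two, and the subnet it realizes and the complement lie on opposite sides of the
  quadrangle $PQRW$.\<close>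

definition vadd :: "'k::field vec3 \<Rightarrow> 'k vec3 \<Rightarrow> 'k vec3" where
  "vadd u v = (case u of (a1, a2, a3) \<Rightarrow> case v of (b1, b2, b3) \<Rightarrow> (a1 + b1, a2 + b2, a3 + b3))"

definition cross3 :: "'k::field vec3 \<Rightarrow> 'k vec3 \<Rightarrow> 'k vec3" where
  "cross3 u v = (case u of (a1, a2, a3) \<Rightarrow> case v of (b1, b2, b3) \<Rightarrow>
     (a2 * b3 - a3 * b2, a3 * b1 - a1 * b3, a1 * b2 - a2 * b1))"

lemma det3_eq_dot3_cross3: "det3 u v w = dot3 u (cross3 v w)"
  by (cases u rule: prod_cases3; cases v rule: prod_cases3; cases w rule: prod_cases3)
     (simp add: det3_def dot3_def cross3_def algebra_simps)

lemma det3_eq_cross3_dot3: "det3 u v w = dot3 (cross3 u v) w"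
  by (cases u rule: prod_cases3; cases v rule: prod_cases3; cases w rule: prod_cases3)
     (simp add: det3_def dot3_def cross3_def algebra_simps)

lemma det3_scale3: "det3 (scale3 a u) (scale3 b v) (scale3 c w) = a * b * c * det3 u v w"
  by (cases u rule: prod_cases3; cases v rule: prod_cases3; cases w rule: prod_cases3)
     (simp add: det3_def scale3_def algebra_simps)

lemma det3_rotate: "det3 u v w = det3 v w u"
  by (cases u rule: prod_cases3; cases v rule: prod_cases3; cases w rule: prod_cases3)
     (simp add: det3_def algebra_simps)

lemma det3_swap_12: "det3 v u w = - det3 u v w"
  by (cases u rule: prod_cases3; cases v rule: prod_cases3; cases w rule: prod_cases3)
     (simp add: det3_def algebra_simps)

lemma det3_swap_23: "det3 u w v = - det3 u v w"
  by (cases u rule: prod_cases3; cases v rule: prod_cases3; cases w rule: prod_cases3)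
     (simp add: det3_def algebra_simps)

lemma det3_same [simp]: "det3 u u w = 0" "det3 u w u = 0" "det3 w u u = 0"
  by (cases u rule: prod_cases3; cases w rule: prod_cases3; simp add: det3_def algebra_simps)+

lemma det3_zero [simp]: "det3 (0, 0, 0) v w = 0" "det3 u (0, 0, 0) w = 0" "det3 u v (0, 0, 0) = 0"
  by (simp_all add: det3_def split: prod.split)

lemma cramer3:
  "scale3 (det3 p q r) x =
     vadd (vadd (scale3 (det3 x q r) p) (scale3 (det3 p x r) q)) (scale3 (det3 p q x) r)"
  by (cases p rule: prod_cases3; cases q rule: prod_cases3; cases r rule: prod_cases3;
      cases x rule: prod_cases3) (simp add: det3_def scale3_def vadd_def algebra_simps)

text \<open>Menelaus' theorem in the coordinates of the sides of the triangle $pqr$.\<close>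

lemma det3_on_triangle_sides:
  "det3 (vadd q (scale3 s r)) (vadd r (scale3 t p)) (vadd p (scale3 u q)) = (1 + s * t * u) * det3 p q r"
  by (cases p rule: prod_cases3; cases q rule: prod_cases3; cases r rule: prod_cases3)
     (simp add: det3_def scale3_def vadd_def algebra_simps)

lemma det3_linear_3:
  "det3 u v (vadd (scale3 a x) (scale3 b y)) = a * det3 u v x + b * det3 u v y"
  by (cases u rule: prod_cases3; cases v rule: prod_cases3; cases x rule: prod_cases3;
      cases y rule: prod_cases3) (simp add: det3_def scale3_def vadd_def algebra_simps)

lemma cross3_cross3: "cross3 (cross3 p q) a = vadd (scale3 (dot3 p a) q) (scale3 (- dot3 q a) p)"
  by (cases p rule: prod_cases3; cases q rule: prod_cases3; cases a rule: prod_cases3)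
     (simp add: dot3_def cross3_def scale3_def vadd_def algebra_simps)

lemma cross3_lincomb:
  "cross3 (vadd (scale3 a v) (scale3 b w)) (vadd (scale3 c v) (scale3 d w)) =
     scale3 (a * d - b * c) (cross3 v w)"
  by (cases v rule: prod_cases3; cases w rule: prod_cases3)
     (simp add: scale3_def vadd_def cross3_def algebra_simps)

lemma scale3_zero [simp]: "scale3 c (0, 0, 0) = (0, 0, 0)"
  by (simp add: scale3_def)

lemma scale3_one [simp]: "scale3 1 v = v"
  by (cases v rule: prod_cases3) (simp add: scale3_def)

lemma scale3_scale3 [simp]: "scale3 a (scale3 b v) = scale3 (a * b) v"
  by (cases v rule: prod_cases3) (simp add: scale3_def)

lemma scale3_eq_zero_iff: "scale3 c v = (0, 0, 0) \<longleftrightarrow> c = 0 \<or> v = (0, 0, 0)"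
  by (cases v rule: prod_cases3) (auto simp add: scale3_def)

lemma scale3_vadd_lincomb:
  "scale3 k (vadd (scale3 a v) (scale3 b w)) = vadd (scale3 (k * a) v) (scale3 (k * b) w)"
  by (cases v rule: prod_cases3; cases w rule: prod_cases3) (simp add: scale3_def vadd_def algebra_simps)

lemma vadd_lincomb_lincomb:
  "vadd (vadd (scale3 a v) (scale3 b w)) (scale3 s (vadd (scale3 c v) (scale3 d w)))
     = vadd (scale3 (a + s * c) v) (scale3 (b + s * d) w)"
  by (cases v rule: prod_cases3; cases w rule: prod_cases3) (simp add: scale3_def vadd_def algebra_simps)

lemma dot3_scale3_right: "dot3 a (scale3 c v) = c * dot3 a v"
  by (cases a rule: prod_cases3; cases v rule: prod_cases3) (simp add: dot3_def scale3_def algebra_simps)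

lemma dot3_scale3_left: "dot3 (scale3 c v) a = c * dot3 v a"
  by (cases a rule: prod_cases3; cases v rule: prod_cases3) (simp add: dot3_def scale3_def algebra_simps)

lemma dot3_commute: "dot3 a b = dot3 b a"
  by (cases a rule: prod_cases3; cases b rule: prod_cases3) (simp add: dot3_def algebra_simps)

lemma cross3_eq_zero_imp_parallel:
  fixes p q :: "'k::field vec3"
  assumes "cross3 p q = (0, 0, 0)" "p \<noteq> (0, 0, 0)"
  shows "\<exists>k. q = scale3 k p"
proof -
  obtain p1 p2 p3 where p: "p = (p1, p2, p3)" by (cases p rule: prod_cases3)
  obtain q1 q2 q3 where q: "q = (q1, q2, q3)" by (cases q rule: prod_cases3)
  have e: "p2 * q3 = p3 * q2" "p3 * q1 = p1 * q3" "p1 * q2 = p2 * q1"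
    using assms(1) by (simp_all add: p q cross3_def)
  consider "p1 \<noteq> 0" | "p1 = 0" "p2 \<noteq> 0" | "p1 = 0" "p2 = 0" "p3 \<noteq> 0"
    using assms(2) p by blast
  then show ?thesis
  proof cases
    case 1
    then show ?thesis by (intro exI[of _ "q1 / p1"]) (use e in \<open>simp add: p q scale3_def field_simps\<close>)
  next
    case 2
    then show ?thesis by (intro exI[of _ "q2 / p2"]) (use e in \<open>simp add: p q scale3_def field_simps\<close>)
  next
    case 3
    then show ?thesis by (intro exI[of _ "q3 / p3"]) (use e in \<open>simp add: p q scale3_def field_simps\<close>)
  qed
qed

lemma cross3_ne_zero_if_det3_ne_zero: "det3 p q r \<noteq> 0 \<Longrightarrow> cross3 q r \<noteq> (0, 0, 0)"
  by (auto simp: det3_eq_dot3_cross3 dot3_def split: prod.split)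

lemma cross3_zero [simp]: "cross3 (0, 0, 0) w = (0, 0, 0)" "cross3 w (0, 0, 0) = (0, 0, 0)"
  by (simp_all add: cross3_def split: prod.split)

lemma lincomb_eq_zero_imp_zero:
  assumes "cross3 v w \<noteq> (0, 0, 0)" "vadd (scale3 a v) (scale3 b w) = (0, 0, 0)"
  shows "a = 0 \<and> b = 0"
proof -
  have "cross3 (vadd (scale3 a v) (scale3 b w)) w = scale3 a (cross3 v w)"
    and "cross3 v (vadd (scale3 a v) (scale3 b w)) = scale3 b (cross3 v w)"
    by (cases v rule: prod_cases3; cases w rule: prod_cases3;
        simp add: scale3_def vadd_def cross3_def algebra_simps)+
  then show ?thesis
    using assms by (metis cross3_zero scale3_eq_zero_iff)
qed

lemma lincomb_eq_imp_coeffs_eq: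
  assumes "cross3 v w \<noteq> (0, 0, 0)"
    and "vadd (scale3 a1 v) (scale3 b1 w) = vadd (scale3 a2 v) (scale3 b2 w)"
  shows "a1 = a2 \<and> b1 = b2"
proof -
  have "vadd (scale3 (a1 - a2) v) (scale3 (b1 - b2) w) = (0, 0, 0)"
    using assms(2) by (cases v rule: prod_cases3; cases w rule: prod_cases3)
      (auto simp: scale3_def vadd_def algebra_simps)
  then show ?thesis using lincomb_eq_zero_imp_zero[OF assms(1)] by fastforce
qed

lemma vadd_scale3_ne_zero: "cross3 v w \<noteq> (0, 0, 0) \<Longrightarrow> vadd v (scale3 s w) \<noteq> (0, 0, 0)"
  using lincomb_eq_zero_imp_zero[of v w 1 s] by auto

section \<open>Points and lines of $PG(2,K)$\<close>

lemma proj_pt_iff: "w \<in> proj_pt v \<longleftrightarrow> (\<exists>c. c \<noteq> 0 \<and> w = scale3 c v)"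
  by (auto simp: proj_pt_def)

lemma proj_pt_self: "v \<in> proj_pt v"
  by (auto simp: proj_pt_iff intro!: exI[of _ 1])

lemma proj_pt_scale3: "c \<noteq> 0 \<Longrightarrow> proj_pt (scale3 c v) = proj_pt v"
  by (auto simp: proj_pt_iff) (metis mult_eq_0_iff nonzero_divide_eq_eq scale3_scale3)+

lemma proj_pt_eq_iff:
  assumes "v \<noteq> (0, 0, 0)"
  shows "proj_pt v = proj_pt w \<longleftrightarrow> (\<exists>c. c \<noteq> 0 \<and> w = scale3 c v)"
  by (metis proj_pt_iff proj_pt_scale3 proj_pt_self)

lemma is_point_proj_pt: "v \<noteq> (0, 0, 0) \<Longrightarrow> is_point (proj_pt v)"
  unfolding is_point_def by blast

definition rep :: "'k::field ppoint \<Rightarrow> 'k vec3" where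
  "rep P = (SOME v. v \<noteq> (0, 0, 0) \<and> P = proj_pt v)"

lemma rep_spec: "is_point P \<Longrightarrow> rep P \<noteq> (0, 0, 0) \<and> P = proj_pt (rep P)"
  unfolding rep_def is_point_def by (rule someI_ex) auto

lemma pcollinear_proj_pt: "pcollinear (proj_pt u) (proj_pt v) (proj_pt w) \<longleftrightarrow> det3 u v w = 0"
proof
  assume "pcollinear (proj_pt u) (proj_pt v) (proj_pt w)"
  then obtain a b c where "a \<noteq> 0" "b \<noteq> 0" "c \<noteq> 0" "det3 (scale3 a u) (scale3 b v) (scale3 c w) = 0"
    by (auto simp: pcollinear_def proj_pt_iff)
  then show "det3 u v w = 0" by (simp add: det3_scale3)
next
  assume "det3 u v w = 0"
  then show "pcollinear (proj_pt u) (proj_pt v) (proj_pt w)"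
    unfolding pcollinear_def using proj_pt_self by blast
qed

lemma pcollinear_rep:
  "is_point P \<Longrightarrow> is_point Q \<Longrightarrow> is_point R \<Longrightarrow>
     pcollinear P Q R \<longleftrightarrow> det3 (rep P) (rep Q) (rep R) = 0"
  using pcollinear_proj_pt[of "rep P" "rep Q" "rep R"] rep_spec by metis

lemma pcollinear_swap_12: "pcollinear P Q R \<longleftrightarrow> pcollinear Q P R"
  unfolding pcollinear_def by (metis det3_swap_12 neg_equal_0_iff_equal)

lemma pcollinear_swap_23: "pcollinear P Q R \<longleftrightarrow> pcollinear P R Q"
  unfolding pcollinear_def by (metis det3_swap_23 neg_equal_0_iff_equal)

lemma pcollinear_rotate: "pcollinear P Q R \<longleftrightarrow> pcollinear Q R P"
  by (metis pcollinear_swap_12 pcollinear_swap_23)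

lemma line_thru_commute: "line_thru P Q = line_thru Q P"
  unfolding line_thru_def by (simp only: pcollinear_swap_12[of P Q])

lemma line_thru_mem [simp]:
  "is_point P \<Longrightarrow> is_point Q \<Longrightarrow> P \<in> line_thru P Q"
  "is_point P \<Longrightarrow> is_point Q \<Longrightarrow> Q \<in> line_thru P Q"
  by (simp_all add: line_thru_def pcollinear_rep)

lemma not_pcollinear_imp_distinct:
  assumes "is_point P" "is_point Q" "is_point R" "\<not> pcollinear P Q R"
  shows "P \<noteq> Q" "Q \<noteq> R" "P \<noteq> R"
  using assms by (auto simp: pcollinear_rep)

lemma line_thru_eq_if_doubleton_eq: "{A, B} = {C, D} \<Longrightarrow> line_thru A B = line_thru C D"
  by (auto simp: doubleton_eq_iff line_thru_commute)

lemma cross3_ne_zero_if_distinct: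
  assumes "b \<noteq> (0, 0, 0)" "c \<noteq> (0, 0, 0)" "proj_pt b \<noteq> proj_pt c"
  shows "cross3 b c \<noteq> (0, 0, 0)"
proof
  assume "cross3 b c = (0, 0, 0)"
  then obtain k where k: "c = scale3 k b" using cross3_eq_zero_imp_parallel assms(1) by blast
  with assms(2) have "k \<noteq> 0" by (auto simp: scale3_eq_zero_iff)
  with k assms(3) show False by (simp add: proj_pt_scale3)
qed

lemma proj_pt_dot3_eq_zero_iff: "(\<forall>v\<in>proj_pt p. dot3 a v = 0) \<longleftrightarrow> dot3 a p = 0"
  by (auto simp: proj_pt_iff dot3_scale3_right intro: proj_pt_self)

lemma line_thru_eq_zero_set:
  assumes "is_point B" "is_point C"
  shows "line_thru B C = {P. is_point P \<and> (\<forall>v\<in>P. dot3 (cross3 (rep B) (rep C)) v = 0)}"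
proof -
  have "pcollinear B C P \<longleftrightarrow> (\<forall>v\<in>P. dot3 (cross3 (rep B) (rep C)) v = 0)" if "is_point P" for P
    using pcollinear_rep[OF assms that] rep_spec[OF that] proj_pt_dot3_eq_zero_iff det3_eq_cross3_dot3
    by metis
  then show ?thesis by (auto simp: line_thru_def)
qed

lemma is_line_line_thru:
  assumes "is_point B" "is_point C" "B \<noteq> C"
  shows "is_line (line_thru B C)"
proof -
  have "cross3 (rep B) (rep C) \<noteq> (0, 0, 0)"
    using cross3_ne_zero_if_distinct rep_spec assms by metis
  then show ?thesis
    unfolding is_line_def line_thru_eq_zero_set[OF assms(1,2)] by blast
qed

lemma line_thru_neq_if_not_pcollinear:
  assumes "is_point U" "is_point V" "\<not> pcollinear X Y U"
  shows "line_thru X Y \<noteq> line_thru U V"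
  using assms line_thru_mem(1)[OF assms(1,2)] by (auto simp: line_thru_def)

lemma is_line_collinear_mem:
  assumes L: "is_line L" and P: "P \<in> L" and Q: "Q \<in> L" and PQ: "P \<noteq> Q"
    and R: "is_point R" and col: "pcollinear P Q R"
  shows "R \<in> L"
proof -
  obtain a where a: "a \<noteq> (0, 0, 0)" "L = {P. is_point P \<and> (\<forall>v\<in>P. dot3 a v = 0)}"
    using L is_line_def by blast
  have pts: "is_point P" "is_point Q" using P Q a by auto
  let ?p = "rep P" and ?q = "rep Q" and ?r = "rep R"
  note reps = rep_spec[OF pts(1)] rep_spec[OF pts(2)] rep_spec[OF R]
  have "\<forall>v\<in>P. dot3 a v = 0" "\<forall>v\<in>Q. dot3 a v = 0" using P Q a(2) by blast+
  then have "dot3 a ?p = 0" "dot3 a ?q = 0"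
    using reps proj_pt_dot3_eq_zero_iff by metis+
  then have "cross3 (cross3 ?p ?q) a = (0, 0, 0)"
    by (simp add: cross3_cross3 dot3_commute[of _ a] scale3_def vadd_def split: prod.split)
  moreover have "cross3 ?p ?q \<noteq> (0, 0, 0)"
    using cross3_ne_zero_if_distinct reps PQ by metis
  ultimately obtain k where k: "a = scale3 k (cross3 ?p ?q)"
    using cross3_eq_zero_imp_parallel by blast
  have "det3 ?p ?q ?r = 0" using col pcollinear_rep pts R by blast
  then have "dot3 a ?r = 0" using k by (simp add: dot3_scale3_left det3_eq_cross3_dot3)
  then have "\<forall>v\<in>R. dot3 a v = 0"
    using reps proj_pt_dot3_eq_zero_iff by metis
  then show ?thesis using a(2) R by simp
qed

lemma proj_pt_on_line_thru:
  assumes "cross3 v w \<noteq> (0, 0, 0)"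
  shows "proj_pt (vadd v (scale3 c w)) \<in> line_thru (proj_pt v) (proj_pt w)"
proof -
  have "det3 v w (vadd v (scale3 c w)) = 0"
    using det3_linear_3[of v w 1 v c w] by simp
  then show ?thesis
    by (simp add: line_thru_def is_point_proj_pt vadd_scale3_ne_zero[OF assms] pcollinear_proj_pt)
qed

lemma lincomb_factor:
  "c \<noteq> 0 \<Longrightarrow> vadd (scale3 c a) (scale3 d b) = scale3 c (vadd a (scale3 (d / c) b))"
  by (cases a rule: prod_cases3; cases b rule: prod_cases3) (simp add: scale3_def vadd_def field_simps)

lemma point_on_side_coordinate:
  fixes w a b v :: "'k::field vec3"
  assumes D: "det3 w a b \<noteq> 0" and col: "det3 a b v = 0" and v0: "v \<noteq> (0, 0, 0)"
    and na: "proj_pt v \<noteq> proj_pt a" and nb: "proj_pt v \<noteq> proj_pt b"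
  shows "\<exists>s. s \<noteq> 0 \<and> proj_pt v = proj_pt (vadd a (scale3 s b))"
proof -
  define c1 c2 where "c1 = det3 w v b / det3 w a b" and "c2 = det3 w a v / det3 w a b"
  have "det3 v a b = 0" using col det3_rotate[of v a b] by simp
  then have "scale3 (det3 w a b) v = vadd (scale3 (det3 w v b) a) (scale3 (det3 w a v) b)"
    using cramer3[of w a b v]
    by (cases w rule: prod_cases3; cases v rule: prod_cases3) (simp add: scale3_def vadd_def)
  then have "scale3 (1 / det3 w a b) (scale3 (det3 w a b) v) = vadd (scale3 c1 a) (scale3 c2 b)"
    unfolding c1_def c2_def by (simp add: scale3_vadd_lincomb)
  then have v: "v = vadd (scale3 c1 a) (scale3 c2 b)"
    using D by simp
  have c1: "c1 \<noteq> 0"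
  proof
    assume "c1 = 0"
    then have "v = scale3 c2 b"
      using v by (cases b rule: prod_cases3; cases a rule: prod_cases3) (simp add: scale3_def vadd_def)
    then show False using nb v0 proj_pt_scale3 by (metis scale3_eq_zero_iff)
  qed
  have c2: "c2 \<noteq> 0"
  proof
    assume "c2 = 0"
    then have "v = scale3 c1 a"
      using v by (cases b rule: prod_cases3; cases a rule: prod_cases3) (simp add: scale3_def vadd_def)
    then show False using na v0 proj_pt_scale3 by (metis scale3_eq_zero_iff)
  qed
  have "proj_pt v = proj_pt (vadd a (scale3 (c2 / c1) b))"
    using v c1 lincomb_factor proj_pt_scale3 by metis
  then show ?thesis using c1 c2 by (intro exI[of _ "c2 / c1"]) simp
qed

lemma not_pcollinear_permute:
  assumes "\<not> pcollinear A B C"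
  shows "\<not> pcollinear B A C" "\<not> pcollinear A C B" "\<not> pcollinear B C A"
    "\<not> pcollinear C A B" "\<not> pcollinear C B A"
  using assms pcollinear_swap_12 pcollinear_swap_23 pcollinear_rotate by blast+

lemma line_thru_neq:
  assumes "is_point U" "is_point V" "\<not> pcollinear X Y U \<or> \<not> pcollinear X Y V"
  shows "line_thru X Y \<noteq> line_thru U V"
  using assms line_thru_neq_if_not_pcollinear line_thru_commute by metis

lemma nondeg_quadrangle_card_sides:
  assumes "nondeg_quadrangle A B C D"
  shows "card {line_thru A B, line_thru C D, line_thru A C, line_thru B D,
    line_thru A D, line_thru B C} = 6"
proof -
  have pts: "is_point A" "is_point B" "is_point C" "is_point D"
    and nc: "\<not> pcollinear A B C" "\<not> pcollinear A B D" "\<not> pcollinear A C D" "\<not> pcollinear B C D"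
    using assms by (simp_all add: nondeg_quadrangle_def)
  note nc_all = nc not_pcollinear_permute[OF nc(1)] not_pcollinear_permute[OF nc(2)]
    not_pcollinear_permute[OF nc(3)] not_pcollinear_permute[OF nc(4)]
  show ?thesis
    using pts nc_all by (simp add: card_insert_if line_thru_neq)
qed

lemma tetrahedron_typeI:
  assumes "dual_3net (2 * m) L1 L2 L3" "\<Gamma>1 \<subseteq> L1" "\<Gamma>2 \<subseteq> L2" "\<Gamma>3 \<subseteq> L3"
    "dual_3net m \<Gamma>1 \<Gamma>2 \<Gamma>3" "nondeg_quadrangle A B C D"
    "(S1, T1) \<in> opposite_sides A B C D" "(S2, T2) \<in> opposite_sides A B C D"
    "(S3, T3) \<in> opposite_sides A B C D" "card {S1, T1, S2, T2, S3, T3} = 6"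
    "\<Gamma>1 \<subseteq> S1" "L1 - \<Gamma>1 \<subseteq> T1" "\<Gamma>2 \<subseteq> S2" "L2 - \<Gamma>2 \<subseteq> T2" "\<Gamma>3 \<subseteq> S3" "L3 - \<Gamma>3 \<subseteq> T3"
  shows "tetrahedron_type L1 L2 L3"
  unfolding tetrahedron_type_def
  by (rule exI[of _ m], rule conjI, rule assms(1),
      rule exI[of _ \<Gamma>1], rule exI[of _ \<Gamma>2], rule exI[of _ \<Gamma>3], intro conjI, (rule assms)+,
      rule exI[of _ A], rule exI[of _ B], rule exI[of _ C], rule exI[of _ D], rule conjI, rule assms(6),
      rule exI[of _ S1], rule exI[of _ T1], rule exI[of _ S2], rule exI[of _ T2], rule exI[of _ S3],
      rule exI[of _ T3], intro conjI, (rule assms)+)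

lemma point_on_side_rep_coordinate:
  assumes tri: "is_point P" "is_point Q" "is_point R" "\<not> pcollinear P Q R"
    and X: "X \<in> line_thru Q R" "X \<noteq> Q" "X \<noteq> R"
  shows "\<exists>s. s \<noteq> 0 \<and> X = proj_pt (vadd (rep Q) (scale3 s (rep R)))"
proof -
  have X': "is_point X" "pcollinear Q R X" using X(1) by (auto simp: line_thru_def)
  note reps = rep_spec[OF tri(1)] rep_spec[OF tri(2)] rep_spec[OF tri(3)] rep_spec[OF X'(1)]
  have "det3 (rep P) (rep Q) (rep R) \<noteq> 0" "det3 (rep Q) (rep R) (rep X) = 0"
    using pcollinear_rep tri X' by blast+
  then show ?thesis
    using point_on_side_coordinate[of "rep P" "rep Q" "rep R" "rep X"] reps X(2,3) by metis
qed

lemma dual_3net_iff: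
  "dual_3net N L1 L2 L3 \<longleftrightarrow>
     Ball L1 is_point \<and> Ball L2 is_point \<and> Ball L3 is_point \<and>
     finite L1 \<and> finite L2 \<and> finite L3 \<and> card L1 = N \<and> card L2 = N \<and> card L3 = N \<and>
     L1 \<inter> L2 = {} \<and> L1 \<inter> L3 = {} \<and> L2 \<inter> L3 = {} \<and>
     (\<forall>L. is_line L \<longrightarrow>
        (L \<inter> L1 \<noteq> {} \<and> L \<inter> L2 \<noteq> {} \<or> L \<inter> L1 \<noteq> {} \<and> L \<inter> L3 \<noteq> {} \<or>
         L \<inter> L2 \<noteq> {} \<and> L \<inter> L3 \<noteq> {}) \<longrightarrow>
        card (L \<inter> L1) = 1 \<and> card (L \<inter> L2) = 1 \<and> card (L \<inter> L3) = 1)"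
proof -
  have all3: "(\<forall>i<3. P i) \<longleftrightarrow> P 0 \<and> P 1 \<and> P 2" for P :: "nat \<Rightarrow> bool"
    by (auto simp: numeral_3_eq_3 numeral_2_eq_2 less_Suc_eq)
  have ex3: "(\<exists>i<3. P i) \<longleftrightarrow> P 0 \<or> P 1 \<or> P 2" for P :: "nat \<Rightarrow> bool"
    by (auto simp: numeral_3_eq_3 numeral_2_eq_2 less_Suc_eq)
  show ?thesis
    unfolding dual_3net_def all3 ex3 by (simp add: Int_commute conj_comms)
qed

lemma dual_3net_rotate: "dual_3net N L1 L2 L3 \<Longrightarrow> dual_3net N L2 L3 L1"
  unfolding dual_3net_iff by (simp add: Int_commute conj_comms)

lemma dual_3net_components:
  assumes "dual_3net N L1 L2 L3"
  shows "Ball L1 is_point" "Ball L2 is_point" "Ball L3 is_point"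
    "finite L1" "finite L2" "finite L3" "card L1 = N" "card L2 = N" "card L3 = N"
    "L1 \<inter> L2 = {}" "L1 \<inter> L3 = {}" "L2 \<inter> L3 = {}"
  using assms by (simp_all add: dual_3net_iff)

lemma dual_3net_line_meeting_two:
  assumes "dual_3net N L1 L2 L3" "is_line L" "L \<inter> L1 \<noteq> {}" "L \<inter> L2 \<noteq> {}"
  shows "card (L \<inter> L1) = 1" "card (L \<inter> L2) = 1" "card (L \<inter> L3) = 1"
  using assms unfolding dual_3net_iff by blast+

text \<open>A vertex lies on a side carrying at least two points of another component, which a line through
  a point of the first component cannot do.\<close>

lemma dual_3net_side_avoids_vertices:
  assumes net: "dual_3net N L1 L2 L3"
    and tri: "is_point P" "is_point Q" "is_point R" "\<not> pcollinear P Q R"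
    and A: "A \<subseteq> L1"
    and B: "B \<subseteq> L2" "B \<subseteq> line_thru R P" "2 \<le> card B"
    and C: "C \<subseteq> L3" "C \<subseteq> line_thru P Q" "2 \<le> card C"
  shows "Q \<notin> A" "R \<notin> A"
proof -
  have distinct: "P \<noteq> Q" "Q \<noteq> R" "P \<noteq> R"
    using not_pcollinear_imp_distinct[OF tri] .
  have fin: "finite L2" "finite L3" using dual_3net_components[OF net] by simp_all
  show "R \<notin> A"
  proof
    assume "R \<in> A"
    moreover have "is_line (line_thru R P)" using is_line_line_thru tri distinct by metis
    moreover have "B \<noteq> {}" using B(3) by auto
    ultimately have "card (line_thru R P \<inter> L2) = 1"
      using dual_3net_line_meeting_two(2)[OF net] A B(1,2) tri(1,3) line_thru_mem(1) by blast
    then show False using card_mono[of "line_thru R P \<inter> L2" B] fin B by auto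
  qed
  show "Q \<notin> A"
  proof
    assume "Q \<in> A"
    moreover have "is_line (line_thru P Q)" using is_line_line_thru tri distinct by metis
    moreover have "C \<noteq> {}" using C(3) by auto
    ultimately have "card (line_thru P Q \<inter> L3) = 1"
      using dual_3net_line_meeting_two(1)[OF dual_3net_rotate[OF dual_3net_rotate[OF net]]]
        A C(1,2) tri(1,2) line_thru_mem(2) by blast
    then show False using card_mono[of "line_thru P Q \<inter> L3" C] fin C by auto
  qed
qed

section \<open>Fixed points of a scaling of a line\<close>

lemma quadratic_with_three_roots:
  fixes A B C :: "'k::field"
  assumes "A * z1\<^sup>2 + B * z1 + C = 0" "A * z2\<^sup>2 + B * z2 + C = 0" "A * z3\<^sup>2 + B * z3 + C = 0"
    and "z1 \<noteq> z2" "z1 \<noteq> z3" "z2 \<noteq> z3"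
  shows "A = 0 \<and> B = 0 \<and> C = 0"
proof -
  have "(z1 - z2) * (A * (z1 + z2) + B) = (A * z1\<^sup>2 + B * z1 + C) - (A * z2\<^sup>2 + B * z2 + C)"
    "(z1 - z3) * (A * (z1 + z3) + B) = (A * z1\<^sup>2 + B * z1 + C) - (A * z3\<^sup>2 + B * z3 + C)"
    by (simp_all add: algebra_simps power2_eq_square)
  then have "(z1 - z2) * (A * (z1 + z2) + B) = 0" "(z1 - z3) * (A * (z1 + z3) + B) = 0"
    using assms(1-3) by simp_all
  then have "A * (z1 + z2) + B = 0" "A * (z1 + z3) + B = 0"
    using assms(4,5) by simp_all
  moreover have "A * (z2 - z3) = (A * (z1 + z2) + B) - (A * (z1 + z3) + B)"
    by (simp add: algebra_simps)
  ultimately have "A * (z2 - z3) = 0" by simp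
  then have "A = 0" using assms(6) by simp
  with \<open>A * (z1 + z2) + B = 0\<close> assms(1) show ?thesis by simp
qed

lemma basis_change_from_two_points:
  fixes v w v' w' :: "'k::field vec3"
  assumes ne: "t1 \<noteq> t2"
    and e1: "vadd v' (scale3 t1 w') = scale3 k1 (vadd v (scale3 s1 w))"
    and e2: "vadd v' (scale3 t2 w') = scale3 k2 (vadd v (scale3 s2 w))"
  obtains a b c d where "v' = vadd (scale3 a v) (scale3 b w)" "w' = vadd (scale3 c v) (scale3 d w)"
proof -
  define c d where "c = (k1 - k2) / (t1 - t2)" and "d = (k1 * s1 - k2 * s2) / (t1 - t2)"
  have solve: "y = c * x + d * z \<and> y' = (k1 - t1 * c) * x + (k1 * s1 - t1 * d) * z"
    if "y' + t1 * y = k1 * (x + s1 * z)" "y' + t2 * y = k2 * (x + s2 * z)" for x y y' z :: 'k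
  proof -
    have "(t1 - t2) * y = (y' + t1 * y) - (y' + t2 * y)" by (simp add: algebra_simps)
    also have "\<dots> = (k1 - k2) * x + (k1 * s1 - k2 * s2) * z"
      using that by (simp add: algebra_simps)
    finally have "(t1 - t2) * y = (k1 - k2) * x + (k1 * s1 - k2 * s2) * z" .
    then have "y = ((k1 - k2) * x + (k1 * s1 - k2 * s2) * z) / (t1 - t2)"
      using ne by (simp add: eq_divide_eq mult.commute)
    then have y: "y = c * x + d * z"
      unfolding c_def d_def by (simp add: add_divide_distrib)
    then show ?thesis using that(1) by (simp add: algebra_simps)
  qed
  obtain x1 x2 x3 where v': "v' = (x1, x2, x3)" by (cases v' rule: prod_cases3)
  obtain y1 y2 y3 where w': "w' = (y1, y2, y3)" by (cases w' rule: prod_cases3)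
  obtain a1 a2 a3 where v: "v = (a1, a2, a3)" by (cases v rule: prod_cases3)
  obtain b1 b2 b3 where w: "w = (b1, b2, b3)" by (cases w rule: prod_cases3)
  have "x1 + t1 * y1 = k1 * (a1 + s1 * b1)" "x2 + t1 * y2 = k1 * (a2 + s1 * b2)"
    "x3 + t1 * y3 = k1 * (a3 + s1 * b3)" "x1 + t2 * y1 = k2 * (a1 + s2 * b1)"
    "x2 + t2 * y2 = k2 * (a2 + s2 * b2)" "x3 + t2 * y3 = k2 * (a3 + s2 * b3)"
    using e1 e2 by (simp_all add: v' w' v w vadd_def scale3_def algebra_simps)
  then have "v' = vadd (scale3 (k1 - t1 * c) v) (scale3 (k1 * s1 - t1 * d) w)"
    "w' = vadd (scale3 c v) (scale3 d w)"
    using solve by (simp_all add: v' w' v w vadd_def scale3_def)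
  then show ?thesis using that by blast
qed

text \<open>$[v]$ and $[w]$ are the fixed points of the projectivity $[v + s w] \mapsto [v + \kappa s w]$, and
  a projectivity is determined by three points. In coordinates: writing $v', w'$ in the basis $v, w$,
  the two scaling relations give a quadratic equation in $s'_i$ with three roots, which forces the
  change of basis to be diagonal or antidiagonal.\<close>

lemma scaling_parametrization_base_points_unique:
  fixes \<pi> :: "'i \<Rightarrow> 'k::field ppoint" and s s' :: "'i \<Rightarrow> 'k" and f :: "'i \<Rightarrow> 'i"
  assumes fin: "finite I" and card: "3 \<le> card I" and inj: "inj_on \<pi> I" and f: "f ` I \<subseteq> I"
    and vw: "cross3 v w \<noteq> (0, 0, 0)" and vw': "cross3 v' w' \<noteq> (0, 0, 0)"
    and par: "\<forall>i\<in>I. s i \<noteq> 0 \<and> \<pi> i = proj_pt (vadd v (scale3 (s i) w))"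
    and par': "\<forall>i\<in>I. s' i \<noteq> 0 \<and> \<pi> i = proj_pt (vadd v' (scale3 (s' i) w'))"
    and scale: "\<forall>i\<in>I. s (f i) = \<kappa> * s i" and \<kappa>: "\<kappa> \<noteq> 1"
    and scale': "\<forall>i\<in>I. s' (f i) = \<kappa>' * s' i"
  shows "{proj_pt v, proj_pt w} = {proj_pt v', proj_pt w'}"
proof -
  have same_point: "\<exists>k. vadd v' (scale3 (s' i) w') = scale3 k (vadd v (scale3 (s i) w))"
    if "i \<in> I" for i
    using par par' that proj_pt_eq_iff vadd_scale3_ne_zero[OF vw] by metis
  have s'_inj: "i = j" if "i \<in> I" "j \<in> I" "s' i = s' j" for i j
    using inj par' that by (metis inj_onD)
  obtain T where "T \<subseteq> I" "card T = 3" using obtain_subset_with_card_n[OF card] .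
  then obtain i1 i2 i3 where i: "i1 \<in> I" "i2 \<in> I" "i3 \<in> I" "i1 \<noteq> i2" "i1 \<noteq> i3" "i2 \<noteq> i3"
    unfolding card_3_iff by blast
  obtain k1 k2 where
    "vadd v' (scale3 (s' i1) w') = scale3 k1 (vadd v (scale3 (s i1) w))"
    "vadd v' (scale3 (s' i2) w') = scale3 k2 (vadd v (scale3 (s i2) w))"
    using same_point i(1,2) by blast
  then obtain a b c d where
    base: "v' = vadd (scale3 a v) (scale3 b w)" "w' = vadd (scale3 c v) (scale3 d w)"
    using basis_change_from_two_points s'_inj i by metis
  have coords: "b + s' i * d = s i * (a + s' i * c)" if i: "i \<in> I" for i
  proof -
    obtain k where k: "vadd v' (scale3 (s' i) w') = scale3 k (vadd v (scale3 (s i) w))"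
      using same_point i by blast
    have "vadd (scale3 (a + s' i * c) v) (scale3 (b + s' i * d) w) =
        vadd (scale3 k v) (scale3 (k * s i) w)"
      using k by (simp add: base vadd_lincomb_lincomb scale3_vadd_lincomb[of k 1 v "s i" w, simplified])
    then show ?thesis using lincomb_eq_imp_coeffs_eq[OF vw] by (metis mult.commute)
  qed
  have \<kappa>': "\<kappa>' \<noteq> 0" using scale' par' f i(1) by fastforce
  have quadratic: "\<kappa>' * c * d * (1 - \<kappa>) * (s' i)\<^sup>2
      + ((b * c + \<kappa>' * a * d) - \<kappa> * (\<kappa>' * b * c + a * d)) * s' i + a * b * (1 - \<kappa>) = 0"
    if "i \<in> I" for i
  proof -
    have "b + (\<kappa>' * s' i) * d = (\<kappa> * s i) * (a + (\<kappa>' * s' i) * c)"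
      using coords[of "f i"] f scale scale' that by auto
    then have "(b + \<kappa>' * s' i * d) * (a + s' i * c) = \<kappa> * (a + \<kappa>' * s' i * c) * (b + s' i * d)"
      using coords[OF that] by (simp add: algebra_simps)
    then show ?thesis by (simp add: algebra_simps power2_eq_square)
  qed
  have "\<kappa>' * c * d * (1 - \<kappa>) = 0" "a * b * (1 - \<kappa>) = 0"
    using quadratic_with_three_roots[OF quadratic[OF i(1)] quadratic[OF i(2)] quadratic[OF i(3)]]
      s'_inj i by blast+
  then have ab: "a * b = 0" and cd: "c * d = 0" using \<kappa> \<kappa>' by auto
  have det: "a * d - b * c \<noteq> 0"
    using vw' cross3_lincomb[of a v b w c d] base by (auto simp: scale3_eq_zero_iff)
  show ?thesis
  proof (cases "a = 0")
    case True
    then have "v' = scale3 b w" "w' = scale3 c v" "b \<noteq> 0" "c \<noteq> 0"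
      using base ab cd det by (auto simp: vadd_def scale3_def split: prod.split)
    then show ?thesis by (auto simp: proj_pt_scale3)
  next
    case False
    then have "v' = scale3 a v" "w' = scale3 d w" "d \<noteq> 0"
      using base ab cd det by (auto simp: vadd_def scale3_def split: prod.split)
    then show ?thesis using False by (simp add: proj_pt_scale3)
  qed
qed

section \<open>Finite groups embedding into a field are cyclic\<close>

lemma card_roots_of_unity_le:
  assumes "0 < d"
  shows "finite {z :: 'k::idom. z ^ d = 1} \<and> card {z :: 'k. z ^ d = 1} \<le> d"
proof -
  let ?p = "Polynomial.monom (1 :: 'k) d - 1"
  have "degree ?p = d"
    using assms degree_add_eq_left[of "- 1" "Polynomial.monom (1 :: 'k) d"] by (simp add: degree_monom_eq)
  moreover have "?p \<noteq> 0" using assms calculation by auto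
  moreover have "{z. z ^ d = 1} = {z. poly ?p z = 0}" by (simp add: poly_monom)
  ultimately show ?thesis using poly_roots_finite card_poly_roots_bound by metis
qed

context group
begin

lemma card_elements_of_ord_le_phi':
  assumes fin: "finite (carrier G)"
    and roots: "\<And>d. 0 < d \<Longrightarrow> card {x \<in> carrier G. x [^] d = \<one>} \<le> d"
  shows "card {x \<in> carrier G. ord x = d} \<le> phi' d"
proof (cases "{x \<in> carrier G. ord x = d} = {}")
  case True
  then show ?thesis by (metis card.empty le0)
next
  case False
  then obtain a where a: "a \<in> carrier G" "ord a = d" by blast
  then have d: "0 < d" using ord_ge_1[OF fin a(1)] by simp
  have powers_are_roots: "(\<lambda>k. a [^] k) ` {1..d} = {x \<in> carrier G. x [^] d = \<one>}"
  proof (rule card_seteq)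
    show "finite {x \<in> carrier G. x [^] d = \<one>}" using fin by simp
    show "(\<lambda>k. a [^] k) ` {1..d} \<subseteq> {x \<in> carrier G. x [^] d = \<one>}"
    proof
      fix x assume "x \<in> (\<lambda>k. a [^] k) ` {1..d}"
      then obtain k :: nat where x: "x = a [^] k" by blast
      have "x [^] d = (a [^] d) [^] k" using a(1) by (simp add: x nat_pow_pow mult.commute)
      then show "x \<in> {x \<in> carrier G. x [^] d = \<one>}" using a pow_ord_eq_1[OF a(1)] by (simp add: x)
    qed
    show "card {x \<in> carrier G. x [^] d = \<one>} \<le> card ((\<lambda>k. a [^] k) ` {1..d})"
      using roots[OF d] ord_inj'[OF a(1)] a(2) by (simp add: card_image)
  qed
  have "{x \<in> carrier G. ord x = d} \<subseteq> (\<lambda>k. a [^] k) ` {k \<in> {1..d}. coprime k d}"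
  proof
    fix x assume x: "x \<in> {x \<in> carrier G. ord x = d}"
    then have "x \<in> (\<lambda>k. a [^] k) ` {1..d}" using powers_are_roots by auto
    then obtain k where "k \<in> {1..d}" "x = a [^] k" by blast
    then show "x \<in> (\<lambda>k. a [^] k) ` {k \<in> {1..d}. coprime k d}"
      using x pow_ord_eq_ord_iff[OF fin a(1), of k] a(2) by auto
  qed
  then have "card {x \<in> carrier G. ord x = d} \<le> card ((\<lambda>k. a [^] k) ` {k \<in> {1..d}. coprime k d})"
    by (intro card_mono) simp_all
  also have "\<dots> \<le> card {k \<in> {1..d}. coprime k d}"
    by (rule card_image_le) simp
  also have "\<dots> = phi' d" by (simp add: phi'_def conj_assoc)
  finally show ?thesis .
qed

text \<open>Counting elements by their order: each divisor $d$ of $|G|$ accounts for at most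
  $\varphi(d)$ elements, and these bounds add up to exactly $|G|$, so some element has order $|G|$.\<close>

lemma cyclic_group_if_roots_bounded:
  assumes fin: "finite (carrier G)"
    and roots: "\<And>d. 0 < d \<Longrightarrow> card {x \<in> carrier G. x [^] d = \<one>} \<le> d"
  shows "cyclic_group G"
proof -
  let ?N = "\<lambda>d. card {x \<in> carrier G. ord x = d}" and ?D = "{d. d dvd order G}"
  have pos: "0 < order G" using fin order_gt_0_iff_finite by blast
  have finD: "finite ?D" using pos by (simp add: finite_divisors_nat)
  have "(\<Sum>d\<in>?D. ?N d) = card (\<Union>d\<in>?D. {x \<in> carrier G. ord x = d})"
    using finD fin by (subst card_UN_disjoint) auto
  also have "(\<Union>d\<in>?D. {x \<in> carrier G. ord x = d}) = carrier G"
    using ord_dvd_group_order by auto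
  finally have "(\<Sum>d\<in>?D. ?N d) = (\<Sum>d\<in>?D. phi' d)"
    using sum_phi'_factors[OF pos] by (simp add: order_def)
  then have "?N (order G) = phi' (order G)"
    using sum_mono_inv[of ?N ?D phi', OF _ card_elements_of_ord_le_phi'[OF fin roots] _ finD]
    by simp
  then have "{x \<in> carrier G. ord x = order G} \<noteq> {}"
    using phi'_nonzero[OF pos] by (metis card.empty less_irrefl)
  then obtain a where a: "a \<in> carrier G" "ord a = order G" by blast
  have "card (generate G {a}) = card (carrier G)"
    using generate_pow_card[OF a(1)] a(2) by (simp add: order_def)
  then have "generate G {a} = carrier G"
    using fin generate_incl a(1) by (simp add: card_subset_eq)
  then have "subgroup_generated G {a} = G"
    using a(1) by (simp add: subgroup_generated_def)
  then show ?thesis unfolding cyclic_group_def using a(1) by blast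
qed

lemma cyclic_group_if_hom_into_field:
  fixes \<mu> :: "'a \<Rightarrow> 'k::field"
  assumes fin: "finite (carrier G)" and inj: "inj_on \<mu> (carrier G)"
    and nonzero: "\<And>x. x \<in> carrier G \<Longrightarrow> \<mu> x \<noteq> 0"
    and hom: "\<And>x y. x \<in> carrier G \<Longrightarrow> y \<in> carrier G \<Longrightarrow> \<mu> (x \<otimes> y) = \<mu> x * \<mu> y"
  shows "cyclic_group G"
proof (rule cyclic_group_if_roots_bounded[OF fin])
  fix d :: nat assume d: "0 < d"
  have one: "\<mu> \<one> = 1"
    using hom[of \<one> \<one>] nonzero[of \<one>] by simp
  have pow: "\<mu> (x [^] n) = \<mu> x ^ n" if "x \<in> carrier G" for x and n :: nat
    using that by (induction n) (simp_all add: one hom)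
  let ?R = "{x \<in> carrier G. x [^] d = \<one>}"
  have "\<mu> ` ?R \<subseteq> {z. z ^ d = 1}" using one by (auto simp flip: pow)
  moreover note card_roots_of_unity_le[OF d, where 'k = 'k]
  ultimately have "card (\<mu> ` ?R) \<le> d" using card_mono[of "{z. z ^ d = 1}" "\<mu> ` ?R"] by linarith
  then show "card ?R \<le> d" using inj by (simp add: card_image inj_on_subset)
qed

end

lemma (in group) mult_inv_mult_cancel [simp]:
  "x \<in> carrier G \<Longrightarrow> y \<in> carrier G \<Longrightarrow> x \<otimes> (inv x \<otimes> y) = y"
  by (simp add: m_assoc[symmetric])

lemma (in group) inv_mult_mult_cancel [simp]:
  "x \<in> carrier G \<Longrightarrow> y \<in> carrier G \<Longrightarrow> inv x \<otimes> (x \<otimes> y) = y"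
  by (simp add: m_assoc[symmetric])

lemma sym_diff_eq_swap: "A = sym_diff B C \<Longrightarrow> C = sym_diff B A"
  by blast

lemma sym_diff_cancel_pairs: "sym_diff (sym_diff A B) (sym_diff (sym_diff A X) (sym_diff B Y)) = sym_diff X Y"
  by blast

lemma sym_diff_insert_insert:
  "W \<notin> M \<Longrightarrow> W' \<notin> M \<Longrightarrow> W \<noteq> W' \<Longrightarrow> sym_diff (insert W M) (insert W' M) = {W, W'}"
  by auto

lemma sym_diff_triangle_quadrangle:
  assumes "W \<notin> {P, Q, R}" "P \<noteq> Q" "Q \<noteq> R" "P \<noteq> R"
  shows "sym_diff {Q, R} {P, Q, R, W} = {P, W}" "sym_diff {R, P} {P, Q, R, W} = {Q, W}"
    "sym_diff {P, Q} {P, Q, R, W} = {R, W}"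
  using assms by auto

lemma sym_diff_pairs_card_2:
  assumes d: "P \<noteq> Q" "Q \<noteq> R" "P \<noteq> R" and fin: "finite S"
    and c: "card (sym_diff {Q, R} S) = 2" "card (sym_diff {R, P} S) = 2" "card (sym_diff {P, Q} S) = 2"
  shows "S = {} \<or> (\<exists>W. W \<notin> {P, Q, R} \<and> S = {P, Q, R, W})"
proof -
  let ?M = "{P, Q, R}"
  have split: "card (sym_diff T S) = card (S - ?M) + card (sym_diff T (S \<inter> ?M))" if "T \<subseteq> ?M" for T
  proof -
    have "sym_diff T S = (S - ?M) \<union> sym_diff T (S \<inter> ?M)" using that by blast
    moreover have "finite (sym_diff T (S \<inter> ?M))" using that finite_subset[of T ?M] fin by auto
    ultimately show ?thesis using fin by (subst card_Un_disjoint[symmetric]) auto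
  qed
  have k: "card (S - ?M) + card (sym_diff {Q, R} (S \<inter> ?M)) = 2"
    "card (S - ?M) + card (sym_diff {R, P} (S \<inter> ?M)) = 2"
    "card (S - ?M) + card (sym_diff {P, Q} (S \<inter> ?M)) = 2"
    using c split[of "{Q, R}"] split[of "{R, P}"] split[of "{P, Q}"] by auto
  have "S \<inter> ?M = {} \<and> card (S - ?M) = 0 \<or> S \<inter> ?M = ?M \<and> card (S - ?M) = 1"
    using d k by (cases "P \<in> S"; cases "Q \<in> S"; cases "R \<in> S"; simp add: Int_insert_right insert_Diff_if)
  then show ?thesis
  proof
    assume "S \<inter> ?M = {} \<and> card (S - ?M) = 0"
    then show ?thesis using fin by auto
  next
    assume "S \<inter> ?M = ?M \<and> card (S - ?M) = 1"
    then obtain W where "S - ?M = {W}" "?M \<subseteq> S" by (auto simp: card_1_singleton_iff)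
    then show ?thesis by blast
  qed
qed

locale realized_dual_3net = group G for G :: "('g, 'z) monoid_scheme" (structure) +
  fixes L1 L2 L3 :: "'k::field ppoint set" and \<alpha> \<beta> \<gamma> :: "'g \<Rightarrow> 'k ppoint"
  assumes finite_carrier: "finite (carrier G)"
    and net: "dual_3net (order G) L1 L2 L3"
    and realizes: "realizes G L1 L2 L3 \<alpha> \<beta> \<gamma>"
begin

lemma bij_betw_components:
  "bij_betw \<alpha> (carrier G) L1" "bij_betw \<beta> (carrier G) L2" "bij_betw \<gamma> (carrier G) L3"
  using realizes by (auto simp: realizes_def)

lemma pcollinear_iff_mult:
  "a \<in> carrier G \<Longrightarrow> b \<in> carrier G \<Longrightarrow> c \<in> carrier G \<Longrightarrow>
     pcollinear (\<alpha> a) (\<beta> b) (\<gamma> c) \<longleftrightarrow> a \<otimes> b = c"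
  using realizes by (auto simp: realizes_def)

lemma components_eq_image:
  "L1 = \<alpha> ` carrier G" "L2 = \<beta> ` carrier G" "L3 = \<gamma> ` carrier G"
  using bij_betw_components by (auto simp: bij_betw_def)

lemma inj_on_components:
  "inj_on \<alpha> (carrier G)" "inj_on \<beta> (carrier G)" "inj_on \<gamma> (carrier G)"
  using bij_betw_components by (auto simp: bij_betw_def)

lemma is_point_components:
  "a \<in> carrier G \<Longrightarrow> is_point (\<alpha> a)" "a \<in> carrier G \<Longrightarrow> is_point (\<beta> a)"
  "a \<in> carrier G \<Longrightarrow> is_point (\<gamma> a)"
  using dual_3net_components(1-3)[OF net] components_eq_image by auto

lemma third_point_on_line:
  assumes L: "is_line L" and ab: "a \<in> carrier G" "b \<in> carrier G"
    and two: "\<alpha> a \<in> L \<and> \<beta> b \<in> L \<or> \<alpha> a \<in> L \<and> \<gamma> (a \<otimes> b) \<in> L \<or> \<beta> b \<in> L \<and> \<gamma> (a \<otimes> b) \<in> L"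
  shows "\<alpha> a \<in> L \<and> \<beta> b \<in> L \<and> \<gamma> (a \<otimes> b) \<in> L"
proof -
  have coll: "pcollinear (\<alpha> a) (\<beta> b) (\<gamma> (a \<otimes> b))"
    using pcollinear_iff_mult ab by simp
  have pts: "is_point (\<alpha> a)" "is_point (\<beta> b)" "is_point (\<gamma> (a \<otimes> b))"
    using is_point_components ab by simp_all
  have neq: "\<alpha> a \<noteq> \<beta> b" "\<alpha> a \<noteq> \<gamma> (a \<otimes> b)" "\<beta> b \<noteq> \<gamma> (a \<otimes> b)"
  proof -
    have "\<alpha> a \<in> L1" "\<beta> b \<in> L2" "\<gamma> (a \<otimes> b) \<in> L3"
      using components_eq_image ab by auto
    then show "\<alpha> a \<noteq> \<beta> b" "\<alpha> a \<noteq> \<gamma> (a \<otimes> b)" "\<beta> b \<noteq> \<gamma> (a \<otimes> b)"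
      using dual_3net_components(10-12)[OF net] by auto
  qed
  consider "\<alpha> a \<in> L" "\<beta> b \<in> L" | "\<alpha> a \<in> L" "\<gamma> (a \<otimes> b) \<in> L" | "\<beta> b \<in> L" "\<gamma> (a \<otimes> b) \<in> L"
    using two by blast
  then show ?thesis
  proof cases
    case 1
    then show ?thesis using is_line_collinear_mem[OF L 1 neq(1) pts(3) coll] by blast
  next
    case 2
    have "pcollinear (\<alpha> a) (\<gamma> (a \<otimes> b)) (\<beta> b)" using coll pcollinear_swap_23 by blast
    then show ?thesis using is_line_collinear_mem[OF L 2 neq(2) pts(2)] 2 by blast
  next
    case 3
    have "pcollinear (\<beta> b) (\<gamma> (a \<otimes> b)) (\<alpha> a)" using coll pcollinear_rotate by blast
    then show ?thesis using is_line_collinear_mem[OF L 3 neq(3) pts(1)] 3 by blast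
  qed
qed

lemma dual_3subnet_of_subgroup:
  assumes K: "subgroup K G"
  shows "dual_3net (card K) (\<alpha> ` K) (\<beta> ` K) (\<gamma> ` K)"
proof -
  have Kc: "K \<subseteq> carrier G" using K subgroup.subset by blast
  then have finK: "finite K" using finite_carrier finite_subset by blast
  have sub: "\<alpha> ` K \<subseteq> L1" "\<beta> ` K \<subseteq> L2" "\<gamma> ` K \<subseteq> L3"
    using Kc by (simp_all add: components_eq_image image_mono)
  have cards: "card (\<alpha> ` K) = card K" "card (\<beta> ` K) = card K" "card (\<gamma> ` K) = card K"
    using inj_on_subset[OF inj_on_components(1) Kc] inj_on_subset[OF inj_on_components(2) Kc]
      inj_on_subset[OF inj_on_components(3) Kc] by (simp_all add: card_image)
  note net_facts = dual_3net_components[OF net]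
  have meets_all: "L \<inter> \<alpha> ` K \<noteq> {} \<and> L \<inter> \<beta> ` K \<noteq> {} \<and> L \<inter> \<gamma> ` K \<noteq> {}"
    if L: "is_line L" and two: "L \<inter> \<alpha> ` K \<noteq> {} \<and> L \<inter> \<beta> ` K \<noteq> {} \<or>
      L \<inter> \<alpha> ` K \<noteq> {} \<and> L \<inter> \<gamma> ` K \<noteq> {} \<or> L \<inter> \<beta> ` K \<noteq> {} \<and> L \<inter> \<gamma> ` K \<noteq> {}" for L
  proof -
    obtain a b where ab: "a \<in> K" "b \<in> K" and "\<alpha> a \<in> L \<and> \<beta> b \<in> L \<or>
        \<alpha> a \<in> L \<and> \<gamma> (a \<otimes> b) \<in> L \<or> \<beta> b \<in> L \<and> \<gamma> (a \<otimes> b) \<in> L"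
    proof -
      consider a b where "a \<in> K" "b \<in> K" "\<alpha> a \<in> L" "\<beta> b \<in> L"
        | a c where "a \<in> K" "c \<in> K" "\<alpha> a \<in> L" "\<gamma> c \<in> L"
        | b c where "b \<in> K" "c \<in> K" "\<beta> b \<in> L" "\<gamma> c \<in> L"
        using two by blast
      then show ?thesis
      proof cases
        case (2 a c)
        then have "inv a \<otimes> c \<in> K" "a \<otimes> (inv a \<otimes> c) = c"
          using K Kc by (auto simp: subgroup.m_closed subgroup.m_inv_closed m_assoc[symmetric] subsetD)
        then show ?thesis using 2 that by metis
      next
        case (3 b c)
        then have "c \<otimes> inv b \<in> K" "c \<otimes> inv b \<otimes> b = c"
          using K Kc by (auto simp: subgroup.m_closed subgroup.m_inv_closed m_assoc subsetD)
        then show ?thesis using 3 that by metis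
      qed (use that in blast)
    qed
    then have "\<alpha> a \<in> L \<and> \<beta> b \<in> L \<and> \<gamma> (a \<otimes> b) \<in> L"
      using third_point_on_line[OF L] ab Kc by blast
    moreover have "a \<otimes> b \<in> K" using K ab by (simp add: subgroup.m_closed)
    ultimately show ?thesis using ab by blast
  qed
  have one_point: "card (L \<inter> S) = 1" if "S \<subseteq> M" "finite M" "card (L \<inter> M) = 1" "L \<inter> S \<noteq> {}"
    for L S M :: "'k ppoint set"
  proof -
    have "card (L \<inter> S) \<le> 1" using that card_mono[of "L \<inter> M" "L \<inter> S"] by auto
    moreover have "finite (L \<inter> S)" using that finite_subset by blast
    ultimately show ?thesis using that(4) by (simp add: le_Suc_eq)
  qed
  show ?thesis
    unfolding dual_3net_iff
  proof (intro conjI allI impI)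
    show "Ball (\<alpha> ` K) is_point" "Ball (\<beta> ` K) is_point" "Ball (\<gamma> ` K) is_point"
      using sub net_facts(1-3) by (meson subsetD)+
    show "finite (\<alpha> ` K)" "finite (\<beta> ` K)" "finite (\<gamma> ` K)"
      using finK by simp_all
    show "\<alpha> ` K \<inter> \<beta> ` K = {}" "\<alpha> ` K \<inter> \<gamma> ` K = {}" "\<beta> ` K \<inter> \<gamma> ` K = {}"
      using Int_mono[OF sub(1) sub(2)] Int_mono[OF sub(1) sub(3)] Int_mono[OF sub(2) sub(3)]
        net_facts(10-12) by auto
    fix L assume L: "is_line L" and two: "L \<inter> \<alpha> ` K \<noteq> {} \<and> L \<inter> \<beta> ` K \<noteq> {} \<or>
      L \<inter> \<alpha> ` K \<noteq> {} \<and> L \<inter> \<gamma> ` K \<noteq> {} \<or> L \<inter> \<beta> ` K \<noteq> {} \<and> L \<inter> \<gamma> ` K \<noteq> {}"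
    have m: "L \<inter> \<alpha> ` K \<noteq> {}" "L \<inter> \<beta> ` K \<noteq> {}" "L \<inter> \<gamma> ` K \<noteq> {}"
      using meets_all[OF L two] by auto
    then have "L \<inter> L1 \<noteq> {}" "L \<inter> L2 \<noteq> {}" using sub by auto
    note one = dual_3net_line_meeting_two[OF net L this]
    show "card (L \<inter> \<alpha> ` K) = 1" using one_point[OF sub(1) net_facts(4) one(1) m(1)] .
    show "card (L \<inter> \<beta> ` K) = 1" using one_point[OF sub(2) net_facts(5) one(2) m(2)] .
    show "card (L \<inter> \<gamma> ` K) = 1" using one_point[OF sub(3) net_facts(6) one(3) m(3)] .
  qed (use cards in simp_all)
qed

end

section \<open>Groups whose coset subnets are triangular\<close>

locale triangular_coset_subnets = realized_dual_3net G L1 L2 L3 \<alpha> \<beta> \<gamma>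
  for G :: "('g, 'z) monoid_scheme" (structure) and L1 L2 L3 :: "'k::field ppoint set"
    and \<alpha> \<beta> \<gamma> :: "'g \<Rightarrow> 'k ppoint" +
  fixes H :: "'g set"
  assumes normal: "H \<lhd> G" and card_H: "card H \<ge> 3"
    and triangular_subnets: "\<forall>g1\<in>carrier G. \<forall>g2\<in>carrier G.
      triangular (\<alpha> ` (g1 <#\<^bsub>G\<^esub> H)) (\<beta> ` (g2 <#\<^bsub>G\<^esub> H))
        (\<gamma> ` ((g1 \<otimes>\<^bsub>G\<^esub> g2) <#\<^bsub>G\<^esub> H))"
begin

lemma subgroup_H: "subgroup H G"
  using normal by (rule normal_imp_subgroup)

lemma H_carrier: "h \<in> H \<Longrightarrow> h \<in> carrier G"
  using subgroup.mem_carrier[OF subgroup_H] .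

lemma finite_H: "finite H"
  using finite_carrier subgroup.subset[OF subgroup_H] finite_subset by blast

lemma nontrivial_H: obtains h where "h \<in> H" "h \<noteq> \<one>"
proof -
  have "H \<noteq> {\<one>}" using card_H by auto
  then show ?thesis using that subgroup.one_closed[OF subgroup_H] by blast
qed

lemma coset_carrier: "x \<in> carrier G \<Longrightarrow> a \<in> x <# H \<Longrightarrow> a \<in> carrier G"
  using l_coset_carrier subgroup_H by blast

lemma coset_self: "x \<in> carrier G \<Longrightarrow> x \<in> x <# H"
  using subgroup.one_closed[OF subgroup_H] by (force simp: l_coset_def)

lemma card_coset:
  assumes "x \<in> carrier G"
  shows "card (x <# H) = card H"
proof -
  have "x <# H = (\<lambda>h. x \<otimes> h) ` H" by (auto simp: l_coset_def)
  moreover have "inj_on (\<lambda>h. x \<otimes> h) H" using assms H_carrier by (auto intro: inj_onI)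
  ultimately show ?thesis by (simp add: card_image)
qed

lemma coset_mult_right: "x \<in> carrier G \<Longrightarrow> a \<in> x <# H \<Longrightarrow> h \<in> H \<Longrightarrow> a \<otimes> h \<in> x <# H"
  by (auto simp: l_coset_def m_assoc H_carrier subgroup.m_closed[OF subgroup_H])

lemma coset_mult_left: "y \<in> carrier G \<Longrightarrow> b \<in> y <# H \<Longrightarrow> h \<in> H \<Longrightarrow> h \<otimes> b \<in> y <# H"
proof -
  assume y: "y \<in> carrier G" and b: "b \<in> y <# H" and h: "h \<in> H"
  obtain k where k: "k \<in> H" "b = y \<otimes> k" using b by (auto simp: l_coset_def)
  have "h \<otimes> b = y \<otimes> ((inv y \<otimes> h \<otimes> y) \<otimes> k)"
    using y h k H_carrier by (simp add: m_assoc[symmetric])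
  moreover have "inv y \<otimes> h \<otimes> y \<otimes> k \<in> H"
    using normal.inv_op_closed1[OF normal y h] k subgroup.m_closed[OF subgroup_H] by blast
  ultimately show ?thesis by (auto simp: l_coset_def)
qed

lemma coset_mult:
  assumes "x \<in> carrier G" "y \<in> carrier G" "a \<in> x <# H" "b \<in> y <# H"
  shows "a \<otimes> b \<in> (x \<otimes> y) <# H"
proof -
  obtain h where h: "h \<in> H" "a = x \<otimes> h" using assms(3) by (auto simp: l_coset_def)
  have "h \<otimes> b \<in> y <# H" using coset_mult_left assms h by blast
  then show ?thesis
    using assms h H_carrier by (auto simp: l_coset_def m_assoc)
qed

lemma coset_inv_mult:
  "x \<in> carrier G \<Longrightarrow> y \<in> carrier G \<Longrightarrow> c \<in> (x \<otimes> y) <# H \<Longrightarrow> inv x \<otimes> c \<in> y <# H"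
  by (auto simp: l_coset_def H_carrier m_assoc[symmetric])

lemma card_coset_images:
  assumes "x \<in> carrier G"
  shows "card (\<alpha> ` (x <# H)) = card H" "card (\<beta> ` (x <# H)) = card H" "card (\<gamma> ` (x <# H)) = card H"
proof -
  have sub: "x <# H \<subseteq> carrier G" using coset_carrier assms by blast
  show "card (\<alpha> ` (x <# H)) = card H" "card (\<beta> ` (x <# H)) = card H" "card (\<gamma> ` (x <# H)) = card H"
    using card_image[OF inj_on_subset[OF inj_on_components(1) sub]]
      card_image[OF inj_on_subset[OF inj_on_components(2) sub]]
      card_image[OF inj_on_subset[OF inj_on_components(3) sub]] card_coset[OF assms] by simp_all
qed

text \<open>The triangle $pqr$ of the triangular subnet realizing the cosets $xH$, $yH$, $xyH$, and the
  coordinate of each of its points on the side it lies on: $\alpha(a) = [q + s_a r]$,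
  $\beta(b) = [r + t_b p]$, $\gamma(c) = [p + u_c q]$.\<close>

definition side_coords ::
  "'g \<Rightarrow> 'g \<Rightarrow> 'k vec3 \<Rightarrow> 'k vec3 \<Rightarrow> 'k vec3 \<Rightarrow> ('g \<Rightarrow> 'k) \<Rightarrow> ('g \<Rightarrow> 'k) \<Rightarrow> ('g \<Rightarrow> 'k) \<Rightarrow> bool"
  where "side_coords x y p q r s t u \<longleftrightarrow> det3 p q r \<noteq> 0 \<and>
    (\<forall>a\<in>x <# H. s a \<noteq> 0 \<and> \<alpha> a = proj_pt (vadd q (scale3 (s a) r))) \<and>
    (\<forall>b\<in>y <# H. t b \<noteq> 0 \<and> \<beta> b = proj_pt (vadd r (scale3 (t b) p))) \<and>
    (\<forall>c\<in>(x \<otimes> y) <# H. u c \<noteq> 0 \<and> \<gamma> c = proj_pt (vadd p (scale3 (u c) q)))"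

lemma side_coords_exist:
  assumes x: "x \<in> carrier G" and y: "y \<in> carrier G"
  shows "\<exists>p q r s t u. side_coords x y p q r s t u"
proof -
  let ?A = "\<alpha> ` (x <# H)" and ?B = "\<beta> ` (y <# H)" and ?C = "\<gamma> ` ((x \<otimes> y) <# H)"
  have "triangular ?A ?B ?C" using triangular_subnets x y by simp
  then obtain P Q R where "is_point P \<and> is_point Q \<and> is_point R \<and> \<not> pcollinear P Q R \<and>
      ?A \<subseteq> line_thru Q R \<and> ?B \<subseteq> line_thru P R \<and> ?C \<subseteq> line_thru P Q"
    unfolding triangular_def by (elim exE) (erule that)
  then have tri: "is_point P" "is_point Q" "is_point R" "\<not> pcollinear P Q R"
    and sides: "?A \<subseteq> line_thru Q R" "?B \<subseteq> line_thru P R" "?C \<subseteq> line_thru P Q"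
    by simp_all
  note sides = sides(1) sides(2)[unfolded line_thru_commute[of P R]] sides(3)
  have xy: "x \<otimes> y \<in> carrier G" using x y by simp
  have "x <# H \<subseteq> carrier G" "y <# H \<subseteq> carrier G" "(x \<otimes> y) <# H \<subseteq> carrier G"
    using coset_carrier[OF x] coset_carrier[OF y] coset_carrier[OF xy] by blast+
  then have in_components: "?A \<subseteq> L1" "?B \<subseteq> L2" "?C \<subseteq> L3"
    by (simp_all add: components_eq_image image_mono)
  have cards: "2 \<le> card ?A" "2 \<le> card ?B" "2 \<le> card ?C"
    using card_coset_images[OF x] card_coset_images[OF y] card_coset_images[OF xy] card_H by linarith+
  have tri_QRP: "\<not> pcollinear Q R P" and tri_RPQ: "\<not> pcollinear R P Q"
    using tri(4) pcollinear_rotate by blast+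
  have A: "Q \<notin> ?A" "R \<notin> ?A"
    using dual_3net_side_avoids_vertices[OF net tri in_components(1,2) sides(2) cards(2)
        in_components(3) sides(3) cards(3)] .
  have B: "R \<notin> ?B" "P \<notin> ?B"
    using dual_3net_side_avoids_vertices[OF dual_3net_rotate[OF net] tri(2,3,1) tri_QRP
        in_components(2,3) sides(3) cards(3) in_components(1) sides(1) cards(1)] .
  have C: "P \<notin> ?C" "Q \<notin> ?C"
    using dual_3net_side_avoids_vertices[OF dual_3net_rotate[OF dual_3net_rotate[OF net]]
        tri(3,1,2) tri_RPQ in_components(3,1) sides(1) cards(1) in_components(2) sides(2) cards(2)] .
  have "\<forall>a\<in>x <# H. \<exists>s. s \<noteq> 0 \<and> \<alpha> a = proj_pt (vadd (rep Q) (scale3 s (rep R)))"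
    using point_on_side_rep_coordinate[OF tri] sides(1) A by blast
  moreover have "\<forall>b\<in>y <# H. \<exists>t. t \<noteq> 0 \<and> \<beta> b = proj_pt (vadd (rep R) (scale3 t (rep P)))"
    using point_on_side_rep_coordinate[OF tri(2,3,1) tri_QRP] sides(2) B by blast
  moreover have "\<forall>c\<in>(x \<otimes> y) <# H. \<exists>u. u \<noteq> 0 \<and> \<gamma> c = proj_pt (vadd (rep P) (scale3 u (rep Q)))"
    using point_on_side_rep_coordinate[OF tri(3,1,2) tri_RPQ] sides(3) C by blast
  moreover have "det3 (rep P) (rep Q) (rep R) \<noteq> 0" using pcollinear_rep tri by blast
  ultimately show ?thesis unfolding side_coords_def by metis
qed

lemma side_coords_collinear:
  assumes T: "side_coords x y p q r s t u" and x: "x \<in> carrier G" and y: "y \<in> carrier G"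
    and a: "a \<in> x <# H" and b: "b \<in> y <# H"
  shows "1 + s a * t b * u (a \<otimes> b) = 0"
proof -
  have c: "a \<otimes> b \<in> (x \<otimes> y) <# H" using coset_mult[OF x y a b] .
  have "pcollinear (\<alpha> a) (\<beta> b) (\<gamma> (a \<otimes> b))"
    using pcollinear_iff_mult coset_carrier[OF x a] coset_carrier[OF y b] by simp
  then have "det3 (vadd q (scale3 (s a) r)) (vadd r (scale3 (t b) p)) (vadd p (scale3 (u (a \<otimes> b)) q)) = 0"
    using T a b c unfolding side_coords_def by (simp add: pcollinear_proj_pt)
  then show ?thesis using T by (simp add: det3_on_triangle_sides side_coords_def)
qed

lemma side_coords_mult_eq:
  assumes T: "side_coords x y p q r s t u" and x: "x \<in> carrier G" and y: "y \<in> carrier G"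
    and "a \<in> x <# H" "b \<in> y <# H" "a' \<in> x <# H" "b' \<in> y <# H" and "a \<otimes> b = a' \<otimes> b'"
  shows "s a * t b = s a' * t b'"
proof -
  have "1 + s a * t b * u (a \<otimes> b) = 1 + s a' * t b' * u (a \<otimes> b)"
    using side_coords_collinear[OF T x y] assms(4-) by metis
  moreover have "u (a \<otimes> b) \<noteq> 0"
    using T coset_mult[OF x y assms(4,5)] unfolding side_coords_def by blast
  ultimately show ?thesis by simp
qed

lemma side_coords_inj:
  assumes T: "side_coords x y p q r s t u" and x: "x \<in> carrier G" and y: "y \<in> carrier G"
  shows "inj_on s (x <# H)" "inj_on t (y <# H)" "inj_on u ((x \<otimes> y) <# H)"
proof -
  have "x \<otimes> y \<in> carrier G" using x y by simp
  then have sub: "x <# H \<subseteq> carrier G" "y <# H \<subseteq> carrier G" "(x \<otimes> y) <# H \<subseteq> carrier G"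
    using coset_carrier x y by blast+
  show "inj_on s (x <# H)"
    using T inj_on_subset[OF inj_on_components(1) sub(1)] unfolding side_coords_def inj_on_def by metis
  show "inj_on t (y <# H)"
    using T inj_on_subset[OF inj_on_components(2) sub(2)] unfolding side_coords_def inj_on_def by metis
  show "inj_on u ((x \<otimes> y) <# H)"
    using T inj_on_subset[OF inj_on_components(3) sub(3)] unfolding side_coords_def inj_on_def by metis
qed

text \<open>Multiplication by an element $h \neq 1$ of $H$ permutes each coset and acts on the side
  coordinates as a scaling by a factor $\neq 1$; it is this projectivity whose fixed points
  identify the ends of the side.\<close>

lemma side_coords_scaling:
  assumes T: "side_coords x y p q r s t u" and x: "x \<in> carrier G" and y: "y \<in> carrier G"
    and h: "h \<in> H" "h \<noteq> \<one>"
  shows "\<exists>\<kappa>. \<kappa> \<noteq> 1 \<and> (\<forall>a\<in>x <# H. s (a \<otimes> h) = \<kappa> * s a)"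
    and "\<exists>\<kappa>. \<kappa> \<noteq> 1 \<and> (\<forall>b\<in>y <# H. t (h \<otimes> b) = \<kappa> * t b)"
    and "\<exists>\<kappa>. \<kappa> \<noteq> 1 \<and> (\<forall>c\<in>(x \<otimes> y) <# H. u (h \<otimes> c) = \<kappa> * u c)"
proof -
  have hc: "h \<in> carrier G" "inv h \<in> H" using h H_carrier subgroup.m_inv_closed[OF subgroup_H] by auto
  have xx: "x \<in> x <# H" "x \<otimes> inv h \<in> x <# H" "h \<otimes> x \<in> x <# H"
    using coset_self[OF x] coset_mult_right[OF x _ hc(2)] coset_mult_left[OF x _ h(1)] by auto
  have yy: "y \<in> y <# H" "inv h \<otimes> y \<in> y <# H"
    using coset_self[OF y] coset_mult_left[OF y _ hc(2)] by auto
  note nonzero = T[unfolded side_coords_def]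
  note inj = side_coords_inj[OF T x y]
  have "x \<noteq> x \<otimes> inv h" "y \<noteq> inv h \<otimes> y" "x \<noteq> h \<otimes> x"
    using h hc x y by (simp_all add: inv_eq_1_iff)
  then have ne: "s x \<noteq> s (x \<otimes> inv h)" "t y \<noteq> t (inv h \<otimes> y)" "s x \<noteq> s (h \<otimes> x)"
    using inj xx yy by (metis inj_on_def)+
  show "\<exists>\<kappa>. \<kappa> \<noteq> 1 \<and> (\<forall>a\<in>x <# H. s (a \<otimes> h) = \<kappa> * s a)"
  proof (intro exI conjI ballI)
    fix a assume a: "a \<in> x <# H"
    have "a \<otimes> h \<otimes> (inv h \<otimes> y) = a \<otimes> y"
      using coset_carrier[OF x a] hc y by (simp add: m_assoc)
    then have "s (a \<otimes> h) * t (inv h \<otimes> y) = s a * t y"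
      using side_coords_mult_eq[OF T x y coset_mult_right[OF x a h(1)] yy(2) a yy(1)] by simp
    then show "s (a \<otimes> h) = t y / t (inv h \<otimes> y) * s a"
      using nonzero yy by (simp add: field_simps)
  qed (use ne nonzero yy in auto)
  show "\<exists>\<kappa>. \<kappa> \<noteq> 1 \<and> (\<forall>b\<in>y <# H. t (h \<otimes> b) = \<kappa> * t b)"
  proof (intro exI conjI ballI)
    fix b assume b: "b \<in> y <# H"
    have "x \<otimes> inv h \<otimes> (h \<otimes> b) = x \<otimes> b"
      using coset_carrier[OF y b] hc x by (simp add: m_assoc)
    then have "s (x \<otimes> inv h) * t (h \<otimes> b) = s x * t b"
      using side_coords_mult_eq[OF T x y xx(2) coset_mult_left[OF y b h(1)] xx(1) b] by simp
    then show "t (h \<otimes> b) = s x / s (x \<otimes> inv h) * t b"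
      using nonzero xx by (simp add: field_simps)
  qed (use ne nonzero xx in auto)
  show "\<exists>\<kappa>. \<kappa> \<noteq> 1 \<and> (\<forall>c\<in>(x \<otimes> y) <# H. u (h \<otimes> c) = \<kappa> * u c)"
  proof (intro exI conjI ballI)
    fix c assume c: "c \<in> (x \<otimes> y) <# H"
    have b: "inv x \<otimes> c \<in> y <# H" using coset_inv_mult[OF x y c] .
    have cc: "c \<in> carrier G" using coset_carrier[OF _ c] x y by simp
    have "x \<otimes> (inv x \<otimes> c) = c" "h \<otimes> x \<otimes> (inv x \<otimes> c) = h \<otimes> c"
      using x cc hc by (simp_all add: m_assoc)
    then have "1 + s x * t (inv x \<otimes> c) * u c = 0" "1 + s (h \<otimes> x) * t (inv x \<otimes> c) * u (h \<otimes> c) = 0"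
      using side_coords_collinear[OF T x y xx(1) b] side_coords_collinear[OF T x y xx(3) b] by simp_all
    then have "s (h \<otimes> x) * t (inv x \<otimes> c) * u (h \<otimes> c) = s x * t (inv x \<otimes> c) * u c"
      by (metis add_left_cancel)
    then show "u (h \<otimes> c) = s x / s (h \<otimes> x) * u c"
      using nonzero xx b by (auto simp: field_simps)
  qed (use ne nonzero xx in auto)
qed

lemma side_coords_cross3:
  assumes "side_coords x y p q r s t u"
  shows "cross3 q r \<noteq> (0, 0, 0)" "cross3 r p \<noteq> (0, 0, 0)" "cross3 p q \<noteq> (0, 0, 0)"
proof -
  have "det3 p q r \<noteq> 0" using assms by (simp add: side_coords_def)
  then have "det3 p q r \<noteq> 0" "det3 q r p \<noteq> 0" "det3 r p q \<noteq> 0"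
    using det3_rotate[of p q r] det3_rotate[of q r p] by simp_all
  then show "cross3 q r \<noteq> (0, 0, 0)" "cross3 r p \<noteq> (0, 0, 0)" "cross3 p q \<noteq> (0, 0, 0)"
    using cross3_ne_zero_if_det3_ne_zero by blast+
qed

lemma coset_scaling_base_points_unique:
  assumes z: "z \<in> carrier G" and \<pi>: "\<pi> \<in> {\<alpha>, \<beta>, \<gamma>}" and f: "f ` (z <# H) \<subseteq> z <# H"
    and "cross3 v w \<noteq> (0, 0, 0)" "cross3 v' w' \<noteq> (0, 0, 0)"
    and "\<forall>c\<in>z <# H. s c \<noteq> 0 \<and> \<pi> c = proj_pt (vadd v (scale3 (s c) w))"
    and "\<forall>c\<in>z <# H. s' c \<noteq> 0 \<and> \<pi> c = proj_pt (vadd v' (scale3 (s' c) w'))"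
    and "\<forall>c\<in>z <# H. s (f c) = \<kappa> * s c" "\<kappa> \<noteq> 1" "\<forall>c\<in>z <# H. s' (f c) = \<kappa>' * s' c"
  shows "{proj_pt v, proj_pt w} = {proj_pt v', proj_pt w'}"
proof (rule scaling_parametrization_base_points_unique[OF _ _ _ f assms(4-)])
  have sub: "z <# H \<subseteq> carrier G" using coset_carrier z by blast
  then show "finite (z <# H)" using finite_carrier finite_subset by blast
  show "3 \<le> card (z <# H)" using card_coset[OF z] card_H by simp
  show "inj_on \<pi> (z <# H)"
    using \<pi> inj_on_subset[OF inj_on_components(1) sub] inj_on_subset[OF inj_on_components(2) sub]
      inj_on_subset[OF inj_on_components(3) sub] by blast
qed

lemma side_coords_ends_unique:
  assumes T: "side_coords x y p q r s t u" and x: "x \<in> carrier G" and y: "y \<in> carrier G"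
    and T': "side_coords x' y' p' q' r' s' t' u'" and x': "x' \<in> carrier G" and y': "y' \<in> carrier G"
  shows "x = x' \<Longrightarrow> {proj_pt q, proj_pt r} = {proj_pt q', proj_pt r'}"
    and "y = y' \<Longrightarrow> {proj_pt r, proj_pt p} = {proj_pt r', proj_pt p'}"
    and "x \<otimes> y = x' \<otimes> y' \<Longrightarrow> {proj_pt p, proj_pt q} = {proj_pt p', proj_pt q'}"
proof -
  obtain h where h: "h \<in> H" "h \<noteq> \<one>" using nontrivial_H .
  have xy: "x \<otimes> y \<in> carrier G" using x y by simp
  show "{proj_pt q, proj_pt r} = {proj_pt q', proj_pt r'}" if eq: "x = x'"
  proof -
    obtain \<kappa> \<kappa>' where k: "\<kappa> \<noteq> 1" "\<forall>a\<in>x <# H. s (a \<otimes> h) = \<kappa> * s a" "\<forall>a\<in>x <# H. s' (a \<otimes> h) = \<kappa>' * s' a"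
      using side_coords_scaling(1)[OF T x y h] side_coords_scaling(1)[OF T' x' y' h] eq by blast
    have f: "(\<lambda>a. a \<otimes> h) ` (x <# H) \<subseteq> x <# H" using coset_mult_right[OF x _ h(1)] by blast
    have par: "\<forall>a\<in>x <# H. s a \<noteq> 0 \<and> \<alpha> a = proj_pt (vadd q (scale3 (s a) r))"
      "\<forall>a\<in>x <# H. s' a \<noteq> 0 \<and> \<alpha> a = proj_pt (vadd q' (scale3 (s' a) r'))"
      using T T' eq by (simp_all add: side_coords_def)
    show ?thesis
      by (rule coset_scaling_base_points_unique[OF x _ f side_coords_cross3(1)[OF T]
            side_coords_cross3(1)[OF T'] par k(2) k(1) k(3)]) simp
  qed
  show "{proj_pt r, proj_pt p} = {proj_pt r', proj_pt p'}" if eq: "y = y'"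
  proof -
    obtain \<kappa> \<kappa>' where k: "\<kappa> \<noteq> 1" "\<forall>b\<in>y <# H. t (h \<otimes> b) = \<kappa> * t b" "\<forall>b\<in>y <# H. t' (h \<otimes> b) = \<kappa>' * t' b"
      using side_coords_scaling(2)[OF T x y h] side_coords_scaling(2)[OF T' x' y' h] eq by blast
    have f: "(\<lambda>b. h \<otimes> b) ` (y <# H) \<subseteq> y <# H" using coset_mult_left[OF y _ h(1)] by blast
    have par: "\<forall>b\<in>y <# H. t b \<noteq> 0 \<and> \<beta> b = proj_pt (vadd r (scale3 (t b) p))"
      "\<forall>b\<in>y <# H. t' b \<noteq> 0 \<and> \<beta> b = proj_pt (vadd r' (scale3 (t' b) p'))"
      using T T' eq by (simp_all add: side_coords_def)
    show ?thesis
      by (rule coset_scaling_base_points_unique[OF y _ f side_coords_cross3(2)[OF T]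
            side_coords_cross3(2)[OF T'] par k(2) k(1) k(3)]) simp
  qed
  show "{proj_pt p, proj_pt q} = {proj_pt p', proj_pt q'}" if eq: "x \<otimes> y = x' \<otimes> y'"
  proof -
    obtain \<kappa> \<kappa>' where k: "\<kappa> \<noteq> 1" "\<forall>c\<in>(x \<otimes> y) <# H. u (h \<otimes> c) = \<kappa> * u c"
        "\<forall>c\<in>(x \<otimes> y) <# H. u' (h \<otimes> c) = \<kappa>' * u' c"
      using side_coords_scaling(3)[OF T x y h] side_coords_scaling(3)[OF T' x' y' h] eq by metis
    have f: "(\<lambda>c. h \<otimes> c) ` ((x \<otimes> y) <# H) \<subseteq> (x \<otimes> y) <# H"
      using coset_mult_left[OF xy _ h(1)] by blast
    have par: "\<forall>c\<in>(x \<otimes> y) <# H. u c \<noteq> 0 \<and> \<gamma> c = proj_pt (vadd p (scale3 (u c) q))"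
      "\<forall>c\<in>(x \<otimes> y) <# H. u' c \<noteq> 0 \<and> \<gamma> c = proj_pt (vadd p' (scale3 (u' c) q'))"
      using T T' eq by (simp_all add: side_coords_def)
    show ?thesis
      by (rule coset_scaling_base_points_unique[OF xy _ f side_coords_cross3(3)[OF T]
            side_coords_cross3(3)[OF T'] par k(2) k(1) k(3)]) simp
  qed
qed

subsection \<open>The ends of the sides\<close>

definition side_ends1 :: "'g \<Rightarrow> 'k ppoint set" where
  "side_ends1 x = (SOME V. \<exists>y\<in>carrier G. \<exists>p q r s t u.
     side_coords x y p q r s t u \<and> V = {proj_pt q, proj_pt r})"

definition side_ends2 :: "'g \<Rightarrow> 'k ppoint set" where
  "side_ends2 y = (SOME V. \<exists>x\<in>carrier G. \<exists>p q r s t u.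
     side_coords x y p q r s t u \<and> V = {proj_pt r, proj_pt p})"

definition side_ends3 :: "'g \<Rightarrow> 'k ppoint set" where
  "side_ends3 z = (SOME V. \<exists>x\<in>carrier G. \<exists>y\<in>carrier G. x \<otimes> y = z \<and> (\<exists>p q r s t u.
     side_coords x y p q r s t u \<and> V = {proj_pt p, proj_pt q}))"

lemma side_ends_eq:
  assumes T: "side_coords x y p q r s t u" and x: "x \<in> carrier G" and y: "y \<in> carrier G"
  shows "side_ends1 x = {proj_pt q, proj_pt r}" "side_ends2 y = {proj_pt r, proj_pt p}"
    "side_ends3 (x \<otimes> y) = {proj_pt p, proj_pt q}"
proof -
  have "\<exists>y\<in>carrier G. \<exists>p q r s t u. side_coords x y p q r s t u \<and> side_ends1 x = {proj_pt q, proj_pt r}"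
    unfolding side_ends1_def by (rule someI_ex) (use T y in blast)
  then show "side_ends1 x = {proj_pt q, proj_pt r}"
    using side_coords_ends_unique(1)[OF T x y _ x] by metis
  have "\<exists>x\<in>carrier G. \<exists>p q r s t u. side_coords x y p q r s t u \<and> side_ends2 y = {proj_pt r, proj_pt p}"
    unfolding side_ends2_def by (rule someI_ex) (use T x in blast)
  then show "side_ends2 y = {proj_pt r, proj_pt p}"
    using side_coords_ends_unique(2)[OF T x y _ _ y] by metis
  have "\<exists>x'\<in>carrier G. \<exists>y'\<in>carrier G. x' \<otimes> y' = x \<otimes> y \<and> (\<exists>p q r s t u.
      side_coords x' y' p q r s t u \<and> side_ends3 (x \<otimes> y) = {proj_pt p, proj_pt q})"
    unfolding side_ends3_def by (rule someI_ex) (use T x y in blast)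
  then show "side_ends3 (x \<otimes> y) = {proj_pt p, proj_pt q}"
    using side_coords_ends_unique(3)[OF T x y] by metis
qed

lemma side_ends_triangle:
  assumes x: "x \<in> carrier G" and y: "y \<in> carrier G"
  obtains P Q R where "is_point P" "is_point Q" "is_point R" "\<not> pcollinear P Q R"
    "side_ends1 x = {Q, R}" "side_ends2 y = {R, P}" "side_ends3 (x \<otimes> y) = {P, Q}"
proof -
  obtain p q r s t u where T: "side_coords x y p q r s t u" using side_coords_exist[OF x y] by blast
  then have D: "det3 p q r \<noteq> 0" by (simp add: side_coords_def)
  then have "p \<noteq> (0, 0, 0)" "q \<noteq> (0, 0, 0)" "r \<noteq> (0, 0, 0)" by auto
  then show ?thesis
    using that[of "proj_pt p" "proj_pt q" "proj_pt r"] side_ends_eq[OF T x y] D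
    by (simp add: is_point_proj_pt pcollinear_proj_pt)
qed

lemma on_side_ends:
  assumes a: "a \<in> carrier G"
  shows "side_ends1 a = {Q, R} \<Longrightarrow> \<alpha> a \<in> line_thru Q R"
    and "side_ends2 a = {R, P} \<Longrightarrow> \<beta> a \<in> line_thru R P"
    and "side_ends3 a = {P, Q} \<Longrightarrow> \<gamma> a \<in> line_thru P Q"
proof -
  obtain p q r s t u where T1: "side_coords a \<one> p q r s t u" using side_coords_exist a by blast
  obtain p' q' r' s' t' u' where T2: "side_coords \<one> a p' q' r' s' t' u'" using side_coords_exist a by blast
  have "\<alpha> a = proj_pt (vadd q (scale3 (s a) r))" "\<gamma> a = proj_pt (vadd p (scale3 (u a) q))"
    using T1 coset_self[OF a] a by (simp_all add: side_coords_def)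
  then have "\<alpha> a \<in> line_thru (proj_pt q) (proj_pt r)" "\<gamma> a \<in> line_thru (proj_pt p) (proj_pt q)"
    using proj_pt_on_line_thru side_coords_cross3[OF T1] by simp_all
  moreover have "\<beta> a = proj_pt (vadd r' (scale3 (t' a) p'))"
    using T2 coset_self[OF a] by (simp add: side_coords_def)
  then have "\<beta> a \<in> line_thru (proj_pt r') (proj_pt p')"
    using proj_pt_on_line_thru side_coords_cross3[OF T2] by simp
  moreover have "side_ends1 a = {proj_pt q, proj_pt r}" "side_ends2 a = {proj_pt r', proj_pt p'}"
    "side_ends3 a = {proj_pt p, proj_pt q}"
    using side_ends_eq[OF T1 a one_closed] side_ends_eq[OF T2 one_closed a] a by simp_all
  ultimately show "side_ends1 a = {Q, R} \<Longrightarrow> \<alpha> a \<in> line_thru Q R"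
    and "side_ends2 a = {R, P} \<Longrightarrow> \<beta> a \<in> line_thru R P"
    and "side_ends3 a = {P, Q} \<Longrightarrow> \<gamma> a \<in> line_thru P Q"
    using line_thru_eq_if_doubleton_eq by metis+
qed

lemma side_ends3_mult:
  assumes "x \<in> carrier G" "y \<in> carrier G"
  shows "side_ends3 (x \<otimes> y) = sym_diff (side_ends1 x) (side_ends2 y)"
proof -
  obtain P Q R where PQR: "is_point P" "is_point Q" "is_point R" "\<not> pcollinear P Q R"
    and "side_ends1 x = {Q, R}" "side_ends2 y = {R, P}" "side_ends3 (x \<otimes> y) = {P, Q}"
    using side_ends_triangle[OF assms] by blast
  then show ?thesis using not_pcollinear_imp_distinct[OF PQR] by auto
qed

text \<open>The vertices that move when the coset $H$ is replaced by $xH$. By the previous lemma this is a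
  homomorphism from $G$ to the group of finite sets of points under symmetric difference.\<close>

definition vertex_shift :: "'g \<Rightarrow> 'k ppoint set" where
  "vertex_shift x = sym_diff (side_ends1 x) (side_ends1 \<one>)"

lemma side_ends_vertex_shift:
  assumes x: "x \<in> carrier G"
  shows "side_ends1 x = sym_diff (side_ends1 \<one>) (vertex_shift x)"
    "side_ends2 x = sym_diff (side_ends2 \<one>) (vertex_shift x)"
    "side_ends3 x = sym_diff (side_ends3 \<one>) (vertex_shift x)"
proof -
  have "side_ends3 x = sym_diff (side_ends1 \<one>) (side_ends2 x)"
    "side_ends3 x = sym_diff (side_ends1 x) (side_ends2 \<one>)"
    "side_ends3 \<one> = sym_diff (side_ends1 \<one>) (side_ends2 \<one>)"
    using side_ends3_mult[OF one_closed x] side_ends3_mult[OF x one_closed]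
      side_ends3_mult[OF one_closed one_closed] x by simp_all
  then show "side_ends1 x = sym_diff (side_ends1 \<one>) (vertex_shift x)"
    "side_ends2 x = sym_diff (side_ends2 \<one>) (vertex_shift x)"
    "side_ends3 x = sym_diff (side_ends3 \<one>) (vertex_shift x)"
    unfolding vertex_shift_def by blast+
qed

lemma vertex_shift_mult:
  assumes "x \<in> carrier G" "y \<in> carrier G"
  shows "vertex_shift (x \<otimes> y) = sym_diff (vertex_shift x) (vertex_shift y)"
proof -
  let ?e1 = "side_ends1 \<one>" and ?e2 = "side_ends2 \<one>"
  have "side_ends3 (x \<otimes> y) = sym_diff (side_ends3 \<one>) (vertex_shift (x \<otimes> y))"
    using side_ends_vertex_shift(3)[OF m_closed[OF assms]] .
  then have "vertex_shift (x \<otimes> y) = sym_diff (side_ends3 \<one>) (side_ends3 (x \<otimes> y))"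
    by (rule sym_diff_eq_swap)
  also have "\<dots> = sym_diff (sym_diff ?e1 ?e2)
      (sym_diff (sym_diff ?e1 (vertex_shift x)) (sym_diff ?e2 (vertex_shift y)))"
    using side_ends3_mult[OF one_closed one_closed] side_ends3_mult[OF assms]
      side_ends_vertex_shift(1)[OF assms(1)] side_ends_vertex_shift(2)[OF assms(2)]
    by (simp only: l_one[OF one_closed])
  also have "\<dots> = sym_diff (vertex_shift x) (vertex_shift y)"
    by (rule sym_diff_cancel_pairs)
  finally show ?thesis .
qed

lemma vertex_shift_one: "vertex_shift \<one> = {}"
  by (simp add: vertex_shift_def)

lemma card_side_ends:
  assumes x: "x \<in> carrier G"
  shows "card (side_ends1 x) = 2" "card (side_ends2 x) = 2" "card (side_ends3 x) = 2"
proof -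
  obtain P Q R where PQR: "is_point P" "is_point Q" "is_point R" "\<not> pcollinear P Q R"
    and "side_ends1 x = {Q, R}" "side_ends2 \<one> = {R, P}" "side_ends3 (x \<otimes> \<one>) = {P, Q}"
    by (rule side_ends_triangle[OF x one_closed])
  then show "card (side_ends1 x) = 2" "card (side_ends3 x) = 2"
    using not_pcollinear_imp_distinct[OF PQR] x by simp_all
  obtain P Q R where PQR: "is_point P" "is_point Q" "is_point R" "\<not> pcollinear P Q R"
    and "side_ends1 \<one> = {Q, R}" "side_ends2 x = {R, P}" "side_ends3 (\<one> \<otimes> x) = {P, Q}"
    by (rule side_ends_triangle[OF one_closed x])
  then show "card (side_ends2 x) = 2"
    using not_pcollinear_imp_distinct[OF PQR] by simp
qed

lemma vertex_shift_cases:
  assumes x: "x \<in> carrier G" and PQR: "is_point P" "is_point Q" "is_point R" "\<not> pcollinear P Q R"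
    and ends: "side_ends1 \<one> = {Q, R}" "side_ends2 \<one> = {R, P}" "side_ends3 \<one> = {P, Q}"
  shows "vertex_shift x = {} \<or> (\<exists>W. W \<notin> {P, Q, R} \<and> vertex_shift x = {P, Q, R, W})"
proof (rule sym_diff_pairs_card_2[OF not_pcollinear_imp_distinct[OF PQR]])
  have "finite (side_ends1 x)" "finite (side_ends1 \<one>)"
    using card_side_ends(1)[OF x] card_side_ends(1)[OF one_closed] card.infinite by force+
  then show "finite (vertex_shift x)" by (simp add: vertex_shift_def)
  show "card (sym_diff {Q, R} (vertex_shift x)) = 2" "card (sym_diff {R, P} (vertex_shift x)) = 2"
    "card (sym_diff {P, Q} (vertex_shift x)) = 2"
    using card_side_ends[OF x] side_ends_vertex_shift[OF x] unfolding ends by simp_all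
qed

lemma vertex_shift_dichotomy:
  assumes x0: "x0 \<in> carrier G" "vertex_shift x0 \<noteq> {}"
    and PQR: "is_point P" "is_point Q" "is_point R" "\<not> pcollinear P Q R"
    and ends: "side_ends1 \<one> = {Q, R}" "side_ends2 \<one> = {R, P}" "side_ends3 \<one> = {P, Q}"
  obtains W where "W \<notin> {P, Q, R}" "vertex_shift x0 = {P, Q, R, W}"
    "\<And>x. x \<in> carrier G \<Longrightarrow> vertex_shift x = {} \<or> vertex_shift x = {P, Q, R, W}"
proof -
  note cases = vertex_shift_cases[OF _ PQR ends]
  have "\<exists>W. W \<notin> {P, Q, R} \<and> vertex_shift x0 = {P, Q, R, W}" using cases[OF x0(1)] x0(2) by simp
  then obtain W where W: "W \<notin> {P, Q, R}" "vertex_shift x0 = {P, Q, R, W}" by (elim exE conjE)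
  have "vertex_shift x = {} \<or> vertex_shift x = {P, Q, R, W}" if x: "x \<in> carrier G" for x
  proof (rule ccontr)
    assume "\<not> ?thesis"
    then have ne: "vertex_shift x \<noteq> {}" "vertex_shift x \<noteq> {P, Q, R, W}" by simp_all
    then have "\<exists>W'. W' \<notin> {P, Q, R} \<and> vertex_shift x = {P, Q, R, W'}"
      using cases[OF x] by simp
    then obtain W' where W': "W' \<notin> {P, Q, R}" "vertex_shift x = {P, Q, R, W'}"
      by (elim exE conjE)
    have "W' \<noteq> W" using ne(2) W'(2) by blast
    have y: "inv x0 \<otimes> x \<in> carrier G" using x0 x by simp
    have "vertex_shift x = sym_diff (vertex_shift x0) (vertex_shift (inv x0 \<otimes> x))"
      using vertex_shift_mult[OF x0(1) y] x0 x by simp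
    then have "vertex_shift (inv x0 \<otimes> x) = sym_diff (vertex_shift x0) (vertex_shift x)"
      by (rule sym_diff_eq_swap)
    also have "\<dots> = sym_diff (insert W {P, Q, R}) (insert W' {P, Q, R})"
      using W(2) W'(2) by (simp add: insert_commute)
    also have "\<dots> = {W, W'}"
      using W(1) W'(1) \<open>W' \<noteq> W\<close> by (intro sym_diff_insert_insert) auto
    finally have S: "vertex_shift (inv x0 \<otimes> x) = {W, W'}" .
    from cases[OF y] show False
    proof (elim disjE exE conjE)
      fix W'' assume "vertex_shift (inv x0 \<otimes> x) = {P, Q, R, W''}"
      then have "P \<in> {W, W'}" using S by (metis insertI1)
      then show False using W(1) W'(1) by blast
    qed (simp add: S)
  qed
  then show ?thesis using that W by blast
qed

lemma not_pcollinear_side_ends: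
  assumes "x \<in> carrier G" "y \<in> carrier G" "side_ends1 x = {V1, V2}" "side_ends2 y = {V2, V3}"
  shows "\<not> pcollinear V1 V2 V3"
proof -
  obtain P Q R where PQR: "is_point P" "is_point Q" "is_point R" "\<not> pcollinear P Q R"
    and "side_ends1 x = {Q, R}" "side_ends2 y = {R, P}" "side_ends3 (x \<otimes> y) = {P, Q}"
    by (rule side_ends_triangle[OF assms(1,2)])
  with assms(3,4) have "V1 = Q" "V2 = R" "V3 = P"
    using not_pcollinear_imp_distinct[OF PQR] by (auto simp: doubleton_eq_iff)
  then show ?thesis using not_pcollinear_permute(3)[OF PQR(4)] by simp
qed

lemma triangular_if_vertex_shift_trivial:
  assumes trivial: "\<forall>x\<in>carrier G. vertex_shift x = {}"
  shows "triangular L1 L2 L3"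
proof -
  obtain P Q R where PQR: "is_point P" "is_point Q" "is_point R" "\<not> pcollinear P Q R"
    and "side_ends1 \<one> = {Q, R}" "side_ends2 \<one> = {R, P}" "side_ends3 (\<one> \<otimes> \<one>) = {P, Q}"
    by (rule side_ends_triangle[OF one_closed one_closed])
  then have "side_ends1 x = {Q, R}" "side_ends2 x = {R, P}" "side_ends3 x = {P, Q}"
    if "x \<in> carrier G" for x
    using side_ends_vertex_shift[OF that] trivial that by simp_all
  then have "L1 \<subseteq> line_thru Q R" "L2 \<subseteq> line_thru P R" "L3 \<subseteq> line_thru P Q"
    using on_side_ends line_thru_commute[of R P] by (auto simp: components_eq_image)
  then show ?thesis unfolding triangular_def using PQR by blast
qed

lemma vertex_shift_kernel_subgroup: "subgroup {x \<in> carrier G. vertex_shift x = {}} G"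
proof (rule subgroupI)
  fix a b assume a: "a \<in> {x \<in> carrier G. vertex_shift x = {}}" and b: "b \<in> {x \<in> carrier G. vertex_shift x = {}}"
  then show "a \<otimes> b \<in> {x \<in> carrier G. vertex_shift x = {}}"
    using vertex_shift_mult by simp
  have a': "a \<in> carrier G" "vertex_shift a = {}" using a by simp_all
  have "vertex_shift (a \<otimes> inv a) = sym_diff (vertex_shift a) (vertex_shift (inv a))"
    using vertex_shift_mult[of a "inv a"] a' by simp
  then show "inv a \<in> {x \<in> carrier G. vertex_shift x = {}}"
    using a' vertex_shift_one by simp
qed (use vertex_shift_one in auto)

lemma card_carrier_eq_twice_vertex_shift_kernel:
  assumes x0: "x0 \<in> carrier G" "vertex_shift x0 \<noteq> {}"
    and two: "\<And>x. x \<in> carrier G \<Longrightarrow> vertex_shift x = {} \<or> vertex_shift x = vertex_shift x0"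
  shows "card (carrier G) = 2 * card {x \<in> carrier G. vertex_shift x = {}}"
proof -
  let ?K = "{x \<in> carrier G. vertex_shift x = {}}"
  have "bij_betw (\<lambda>x. x0 \<otimes> x) ?K (carrier G - ?K)"
  proof (rule bij_betwI[where g = "\<lambda>y. inv x0 \<otimes> y"])
    show "(\<lambda>x. x0 \<otimes> x) \<in> ?K \<rightarrow> carrier G - ?K"
      using x0 vertex_shift_mult[OF x0(1)] by auto
    show "(\<lambda>y. inv x0 \<otimes> y) \<in> carrier G - ?K \<rightarrow> ?K"
    proof
      fix y assume y: "y \<in> carrier G - ?K"
      then have "vertex_shift y = vertex_shift x0" using two by blast
      moreover have "vertex_shift y = sym_diff (vertex_shift x0) (vertex_shift (inv x0 \<otimes> y))"
        using vertex_shift_mult[of x0 "inv x0 \<otimes> y"] x0 y by simp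
      ultimately show "inv x0 \<otimes> y \<in> ?K" using x0 y by auto
    qed
  qed (use x0 in \<open>auto simp: m_assoc[symmetric]\<close>)
  then have "card (carrier G - ?K) = card ?K" by (simp add: bij_betw_same_card)
  moreover have "?K \<subseteq> carrier G" by blast
  then have "card (carrier G - ?K) = card (carrier G) - card ?K" "card ?K \<le> card (carrier G)"
    using finite_carrier by (simp_all add: card_Diff_subset card_mono finite_subset)
  ultimately show ?thesis by simp
qed

lemma tetrahedron_type_if_vertex_shift_nontrivial:
  assumes x0: "x0 \<in> carrier G" "vertex_shift x0 \<noteq> {}"
  shows "tetrahedron_type L1 L2 L3"
proof -
  obtain P Q R where PQR: "is_point P" "is_point Q" "is_point R" "\<not> pcollinear P Q R"
    and ends: "side_ends1 \<one> = {Q, R}" "side_ends2 \<one> = {R, P}" "side_ends3 (\<one> \<otimes> \<one>) = {P, Q}"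
    by (rule side_ends_triangle[OF one_closed one_closed])
  then have ends3: "side_ends3 \<one> = {P, Q}" by simp
  obtain W where W: "W \<notin> {P, Q, R}" "vertex_shift x0 = {P, Q, R, W}"
    and two: "\<And>x. x \<in> carrier G \<Longrightarrow> vertex_shift x = {} \<or> vertex_shift x = {P, Q, R, W}"
    using vertex_shift_dichotomy[OF x0 PQR ends(1,2) ends3] by blast
  define K where "K = {x \<in> carrier G. vertex_shift x = {}}"
  have x0K: "x0 \<in> carrier G - K" using x0 by (simp add: K_def)
  have distinct: "P \<noteq> Q" "Q \<noteq> R" "P \<noteq> R" using not_pcollinear_imp_distinct[OF PQR] .
  have inside: "side_ends1 x = {Q, R}" "side_ends2 x = {R, P}" "side_ends3 x = {P, Q}" if "x \<in> K" for x
    using that side_ends_vertex_shift[of x] ends(1,2) ends3 by (simp_all add: K_def)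
  have outside: "side_ends1 x = {P, W}" "side_ends2 x = {Q, W}" "side_ends3 x = {R, W}"
    if x: "x \<in> carrier G - K" for x
  proof -
    have "vertex_shift x = {P, Q, R, W}" using two x by (auto simp: K_def)
    then show "side_ends1 x = {P, W}" "side_ends2 x = {Q, W}" "side_ends3 x = {R, W}"
      using side_ends_vertex_shift[of x] x ends(1,2) ends3 sym_diff_triangle_quadrangle[OF W(1) distinct]
      by simp_all
  qed
  have "is_point W"
  proof -
    obtain P' Q' R' where "is_point P'" "is_point Q'" "is_point R'" "\<not> pcollinear P' Q' R'"
      "side_ends1 x0 = {Q', R'}" "side_ends2 \<one> = {R', P'}" "side_ends3 (x0 \<otimes> \<one>) = {P', Q'}"
      by (rule side_ends_triangle[OF x0(1) one_closed])
    then show ?thesis using outside(1)[OF x0K] by (auto simp: doubleton_eq_iff)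
  qed
  moreover have "\<not> pcollinear R Q W"
    using not_pcollinear_side_ends[OF one_closed x0(1)] ends(1) outside(2)[OF x0K] by (simp add: insert_commute)
  moreover have "\<not> pcollinear P W Q" "\<not> pcollinear W P R"
    using not_pcollinear_side_ends[OF x0(1) x0(1)] not_pcollinear_side_ends[OF x0(1) one_closed]
      outside(1,2)[OF x0K] ends(2) by (simp_all add: insert_commute)
  ultimately have quadrangle: "nondeg_quadrangle Q R P W"
    unfolding nondeg_quadrangle_def using PQR not_pcollinear_permute by blast
  have K_carrier: "K \<subseteq> carrier G" by (simp add: K_def)
  have "\<alpha> a \<in> line_thru Q R" "\<beta> a \<in> line_thru R P" "\<gamma> a \<in> line_thru Q P" if a: "a \<in> K" for a
    using on_side_ends(1)[OF _ inside(1)[OF a]] on_side_ends(2)[OF _ inside(2)[OF a]]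
      on_side_ends(3)[OF _ inside(3)[OF a]] a K_carrier line_thru_commute[of P Q] by auto
  moreover have "\<alpha> a \<in> line_thru P W" "\<beta> a \<in> line_thru Q W" "\<gamma> a \<in> line_thru R W"
    if a: "a \<in> carrier G - K" for a
    using on_side_ends(1)[OF _ outside(1)[OF a]] on_side_ends(2)[OF _ outside(2)[OF a]]
      on_side_ends(3)[OF _ outside(3)[OF a]] a by auto
  ultimately have incl: "\<alpha> ` K \<subseteq> line_thru Q R" "L1 - \<alpha> ` K \<subseteq> line_thru P W"
    "\<beta> ` K \<subseteq> line_thru R P" "L2 - \<beta> ` K \<subseteq> line_thru Q W"
    "\<gamma> ` K \<subseteq> line_thru Q P" "L3 - \<gamma> ` K \<subseteq> line_thru R W"
    unfolding components_eq_image by blast+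
  have six: "card {line_thru Q R, line_thru P W, line_thru R P, line_thru Q W, line_thru Q P, line_thru R W} = 6"
    using nondeg_quadrangle_card_sides[OF quadrangle] by (simp add: insert_commute)
  have opposite: "(line_thru Q R, line_thru P W) \<in> opposite_sides Q R P W"
    "(line_thru R P, line_thru Q W) \<in> opposite_sides Q R P W"
    "(line_thru Q P, line_thru R W) \<in> opposite_sides Q R P W"
    by (simp_all add: opposite_sides_def)
  have "card (carrier G) = 2 * card K"
    using card_carrier_eq_twice_vertex_shift_kernel[OF x0] two W(2) unfolding K_def by metis
  then have net2: "dual_3net (2 * card K) L1 L2 L3" using net by (simp add: order_def)
  have subnet: "dual_3net (card K) (\<alpha> ` K) (\<beta> ` K) (\<gamma> ` K)"
    using dual_3subnet_of_subgroup[OF vertex_shift_kernel_subgroup] by (simp add: K_def)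
  have sub: "\<alpha> ` K \<subseteq> L1" "\<beta> ` K \<subseteq> L2" "\<gamma> ` K \<subseteq> L3"
    using K_carrier by (simp_all add: components_eq_image image_mono)
  show ?thesis
    by (rule tetrahedron_typeI[OF net2 sub subnet quadrangle opposite six incl])
qed

lemma cyclic_group_H: "cyclic_group (subgroup_generated G H)"
proof -
  obtain p q r s t u where T: "side_coords \<one> \<one> p q r s t u"
    using side_coords_exist by blast
  have coset_H: "\<one> <# H = H" using lcos_mult_one subgroup.subset[OF subgroup_H] by blast
  have s: "s h \<noteq> 0" if "h \<in> H" for h
    using T that coset_H by (simp add: side_coords_def)
  define \<mu> where "\<mu> h = s h / s \<one>" for h
  have \<mu>_mult: "\<mu> (a \<otimes> h) = \<mu> a * \<mu> h" if a: "a \<in> H" and h: "h \<in> H" for a h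
  proof (cases "h = \<one>")
    case True
    then show ?thesis using a s H_carrier subgroup.one_closed[OF subgroup_H] by (simp add: \<mu>_def)
  next
    case False
    then obtain \<kappa> where \<kappa>: "\<forall>a\<in>H. s (a \<otimes> h) = \<kappa> * s a"
      using side_coords_scaling(1)[OF T one_closed one_closed h] coset_H by auto
    have "s h = \<kappa> * s \<one>"
      using \<kappa> subgroup.one_closed[OF subgroup_H] H_carrier[OF h] by force
    then have "\<kappa> = \<mu> h"
      using s subgroup.one_closed[OF subgroup_H] by (simp add: \<mu>_def)
    then show ?thesis using \<kappa> a s subgroup.one_closed[OF subgroup_H] by (simp add: \<mu>_def)
  qed
  have "inj_on \<mu> H"
    using side_coords_inj(1)[OF T one_closed one_closed] s subgroup.one_closed[OF subgroup_H] coset_H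
    by (simp add: \<mu>_def inj_on_def)
  moreover have "\<mu> h \<noteq> 0" if "h \<in> H" for h
    using s that subgroup.one_closed[OF subgroup_H] by (simp add: \<mu>_def)
  moreover have "carrier (subgroup_generated G H) = H"
    using subgroup.carrier_subgroup_generated_subgroup[OF subgroup_H] .
  ultimately show ?thesis
    using group.cyclic_group_if_hom_into_field[OF group_subgroup_generated, of H \<mu>] finite_H \<mu>_mult
    by simp
qed

theorem cyclic_and_triangular_or_tetrahedron_type:
  "cyclic_group (subgroup_generated G H) \<and> (triangular L1 L2 L3 \<or> tetrahedron_type L1 L2 L3)"
  using cyclic_group_H triangular_if_vertex_shift_trivial tetrahedron_type_if_vertex_shift_nontrivial
  by blast

end

theorem proposition6p8:
  fixes G :: "'g monoid" and H :: "'g set"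
    and \<Lambda>1 \<Lambda>2 \<Lambda>3 :: "'k::alg_closed_field ppoint set"
    and \<alpha> \<beta> \<gamma> :: "'g \<Rightarrow> 'k ppoint"
  assumes char: "CHAR('k) = 0 \<or> CHAR('k) \<ge> 5"
    and grp: "group G" and fin: "finite (carrier G)"
    and nrm: "H \<lhd> G" and ord: "card H \<ge> 3"
    and net: "dual_3net (order G) \<Lambda>1 \<Lambda>2 \<Lambda>3"
    and real: "realizes G \<Lambda>1 \<Lambda>2 \<Lambda>3 \<alpha> \<beta> \<gamma>"
    and small: "CHAR('k) > 0 \<longrightarrow> order G < CHAR('k)"
    and sub: "\<forall>g1\<in>carrier G. \<forall>g2\<in>carrier G.
               triangular (\<alpha> ` (g1 <#\<^bsub>G\<^esub> H)) (\<beta> ` (g2 <#\<^bsub>G\<^esub> H))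
                          (\<gamma> ` ((g1 \<otimes>\<^bsub>G\<^esub> g2) <#\<^bsub>G\<^esub> H))"
  shows "cyclic_group (subgroup_generated G H) \<and>
         (triangular \<Lambda>1 \<Lambda>2 \<Lambda>3 \<or> tetrahedron_type \<Lambda>1 \<Lambda>2 \<Lambda>3)"
proof -
  interpret triangular_coset_subnets G \<Lambda>1 \<Lambda>2 \<Lambda>3 \<alpha> \<beta> \<gamma> H
    unfolding triangular_coset_subnets_def triangular_coset_subnets_axioms_def
      realized_dual_3net_def realized_dual_3net_axioms_def
    using grp fin net real nrm ord sub by blast
  show ?thesis by (rule cyclic_and_triangular_or_tetrahedron_type)
qed

end
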